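(* Let $N\ge0$ be an integer and let $\phi\in L^2(\mathbb{Q}_p)$ be a refinable function with $\operatorname{supp}\phi\subset B_N(0)$. Then there exist complex numbers $h_k$, $k=0,\dots,p^{N+1}-1$, such that $$\phi(x)=\sum_{k=0}^{p^{N+1}-1}h_k\,\phi\Big(\frac{x}{p}-\frac{k}{p^{N+1}}\Big)\qquad\text{for all }x\in\mathbb{Q}_p$$ (as elements of $L^2(\mathbb{Q}_p)$).
   Context: $p$ is a prime, $\mathbb{Q}_p$ the field of $p$-adic numbers with norm $|\cdot|_p$ and Haar measure $dx$. Every nonzero $x\in\mathbb{Q}_p$ has canonical form $x=p^{\gamma}\sum_{j\ge0}x_jp^j$ with $x_j\in\{0,\dots,p-1\}$, $x_0\ne0$; its fractional part is $\{x\}_p=p^{\gamma}\sum_{j=0}^{-\gamma-1}x_jp^j$, and $\{0\}_p=0$. $I_p=\{a\in\mathbb{Q}_p:\{a\}_p=a\}$, $B_\gamma(a)=\{x:|x-a|_p\le p^\gamma\}$. A function $\phi\in L^2(\mathbb{Q}_p)$ is called refinable if it satisfies a refinement equation $\phi(x)=\sum_{a\in I_p}\alpha_a\phi(p^{-1}x-a)$ with complex coefficients $\alpha_a$ (convergence in $L^2(\mathbb{Q}_p)$), i.e. $\phi$ lies in $\overline{\operatorname{span}\{\phi(p^{-1}x-a): a\in I_p\}}$. *)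

theory Defs
  imports "HOL-Analysis.Analysis"
begin

text \<open>A concrete model of the p-adic numbers Q_p via canonical digit expansions.
  An element x = sum_j x_j p^j is represented by its digit function d :: int => nat,
  with digits in {0..p-1} and d j = 0 for all sufficiently negative j.\<close>

definition qp :: "nat \<Rightarrow> (int \<Rightarrow> nat) set" where
  "qp p = {d. (\<forall>j. d j < p) \<and> (\<exists>g. \<forall>j<g. d j = 0)}"

definition qp_zero :: "int \<Rightarrow> nat" where
  "qp_zero = (\<lambda>_. 0)"

definition qp_trunc :: "nat \<Rightarrow> (int \<Rightarrow> nat) \<Rightarrow> int \<Rightarrow> real" where
  "qp_trunc p d n = (\<Sum>j\<in>{j. j < n \<and> d j \<noteq> 0}. real (d j) * real p powi j)"

definition rmod :: "real \<Rightarrow> real \<Rightarrow> real" where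
  "rmod a m = a - m * of_int \<lfloor>a / m\<rfloor>"

text \<open>Subtraction x - y in Q_p: the digit j of x - y is read off from
  (x - y) mod p^(j+1), computed from the truncations.\<close>
definition qp_diff :: "nat \<Rightarrow> (int \<Rightarrow> nat) \<Rightarrow> (int \<Rightarrow> nat) \<Rightarrow> (int \<Rightarrow> nat)" where
  "qp_diff p x y = (\<lambda>j. nat \<lfloor>rmod (qp_trunc p x (j+1) - qp_trunc p y (j+1)) (real p powi (j+1))
                          / real p powi j\<rfloor>)"

definition qp_divp :: "nat \<Rightarrow> (int \<Rightarrow> nat) \<Rightarrow> (int \<Rightarrow> nat)" where
  "qp_divp p x = (\<lambda>j. x (j+1))"

definition qp_of_nat :: "nat \<Rightarrow> nat \<Rightarrow> (int \<Rightarrow> nat)" where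
  "qp_of_nat p k = (\<lambda>j. if j < 0 then 0 else (k div p ^ nat j) mod p)"

definition qp_norm :: "nat \<Rightarrow> (int \<Rightarrow> nat) \<Rightarrow> real" where
  "qp_norm p x = (if x = qp_zero then 0 else real p powr (- real_of_int (LEAST j. x j \<noteq> 0)))"

definition qp_frac :: "(int \<Rightarrow> nat) \<Rightarrow> (int \<Rightarrow> nat)" where
  "qp_frac x = (\<lambda>j. if j < 0 then x j else 0)"

definition Ip :: "nat \<Rightarrow> (int \<Rightarrow> nat) set" where
  "Ip p = {a \<in> qp p. qp_frac a = a}"

definition qp_ball :: "nat \<Rightarrow> int \<Rightarrow> (int \<Rightarrow> nat) \<Rightarrow> (int \<Rightarrow> nat) set" where
  "qp_ball p g a = {x \<in> qp p. qp_norm p (qp_diff p x a) \<le> real p powr real_of_int g}"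

definition qp_space :: "nat \<Rightarrow> (int \<Rightarrow> nat) measure" where
  "qp_space p = sigma (qp p) {qp_ball p g a | g a. a \<in> qp p}"

text \<open>Haar measure on Q_p (normalised by mu(Z_p) = 1), obtained as the image of Lebesgue
  measure on [0,inf) under the inverse Monna map t |-> (digit j = floor(t p^(j+1)) mod p).\<close>
definition qp_of_real :: "nat \<Rightarrow> real \<Rightarrow> (int \<Rightarrow> nat)" where
  "qp_of_real p t = (\<lambda>j. nat (\<lfloor>t * real p powi (j+1)\<rfloor> mod int p))"

definition haar :: "nat \<Rightarrow> (int \<Rightarrow> nat) measure" where
  "haar p = distr (restrict_space lborel {0..}) (qp_space p) (qp_of_real p)"

definition qp_L2 :: "nat \<Rightarrow> ((int \<Rightarrow> nat) \<Rightarrow> complex) \<Rightarrow> bool" where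
  "qp_L2 p f \<longleftrightarrow> f \<in> borel_measurable (haar p) \<and> integrable (haar p) (\<lambda>x. (cmod (f x))\<^sup>2)"

text \<open>Refinable: phi lies in the L^2-closure of span{phi(p^{-1}x - a) : a in I_p}.\<close>
definition refinable :: "nat \<Rightarrow> ((int \<Rightarrow> nat) \<Rightarrow> complex) \<Rightarrow> bool" where
  "refinable p f \<longleftrightarrow> qp_L2 p f \<and>
     (\<forall>e>0. \<exists>F c. finite F \<and> F \<subseteq> Ip p \<and>
        (\<integral>\<^sup>+ x. ennreal ((cmod (f x - (\<Sum>a\<in>F. c a * f (qp_diff p (qp_divp p x) a))))\<^sup>2) \<partial>haar p)
          < ennreal e)"

end

theory Submission
  imports Defs
begin

text \<open>Let \<open>S = B\<^sub>N(0)\<close>. If \<open>x \<in> S\<close> and \<open>x/p - a \<in> S\<close> with \<open>a \<in> I\<^sub>p\<close>, then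
  \<open>|a|\<^sub>p \<le> p^(N+1)\<close>, so \<open>a = k/p^(N+1)\<close> with \<open>k < p^(N+1)\<close>; and if \<open>x \<notin> S\<close>, none of the points
  \<open>x/p - k/p^(N+1)\<close> lies in \<open>S\<close>. As \<open>\<phi>\<close> vanishes off \<open>S\<close>, multiplying the
  approximate refinement equations by \<open>1\<^sub>S\<close> gives arbitrarily good approximations of
  \<open>1\<^sub>S \<phi>\<close> by combinations of the finitely many functions \<open>1\<^sub>S \<phi>(x/p - k/p^(N+1))\<close>.
  A finite-dimensional subspace of \<open>L\<^sup>2\<close> is closed, so \<open>1\<^sub>S \<phi>\<close> lies in their span, which is
  the claimed equation on \<open>S\<close>; off \<open>S\<close> both sides vanish. Throughout, the map
  \<open>x \<mapsto> x/p - a\<close> sends Haar measure to \<open>1/p\<close> times itself (checked on balls, whose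
  measure is computed through the Monna map), so it preserves square integrability and null sets.\<close>

section \<open>Approximation by finite spans in \<open>L\<^sup>2\<close>\<close>

definition L2_sq :: "'a measure \<Rightarrow> ('a \<Rightarrow> complex) \<Rightarrow> ennreal" where
  "L2_sq M f = (\<integral>\<^sup>+ x. ennreal ((cmod (f x))\<^sup>2) \<partial>M)"

definition approx_by_span :: "'a measure \<Rightarrow> (nat \<Rightarrow> 'a \<Rightarrow> complex) \<Rightarrow> nat \<Rightarrow> ('a \<Rightarrow> complex) \<Rightarrow> bool" where
  "approx_by_span M g n f \<longleftrightarrow> (\<forall>e>0. \<exists>c. L2_sq M (\<lambda>x. f x - (\<Sum>i<n. c i * g i x)) < ennreal e)"

lemma cmod_add_sq_le: "(cmod (a + b))\<^sup>2 \<le> 2 * (cmod a)\<^sup>2 + 2 * (cmod b)\<^sup>2"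
proof -
  have "(cmod (a+b))\<^sup>2 \<le> (cmod a + cmod b)\<^sup>2" by (simp add: norm_triangle_ineq power_mono)
  also have "\<dots> \<le> 2 * (cmod a)\<^sup>2 + 2 * (cmod b)\<^sup>2"
    by (smt (verit, best) sum_squares_bound power2_sum)
  finally show ?thesis .
qed

lemma L2_sq_add_le:
  assumes "f \<in> borel_measurable M" "g \<in> borel_measurable M"
  shows "L2_sq M (\<lambda>x. f x + g x) \<le> 2 * L2_sq M f + 2 * L2_sq M g"
proof -
  have "L2_sq M (\<lambda>x. f x + g x)
      \<le> (\<integral>\<^sup>+ x. 2 * ennreal ((cmod (f x))\<^sup>2) + 2 * ennreal ((cmod (g x))\<^sup>2) \<partial>M)"
    unfolding L2_sq_def
  proof (rule nn_integral_mono)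
    fix x
    have "ennreal ((cmod (f x + g x))\<^sup>2) \<le> ennreal (2 * (cmod (f x))\<^sup>2 + 2 * (cmod (g x))\<^sup>2)"
      by (intro ennreal_leI cmod_add_sq_le)
    thus "ennreal ((cmod (f x + g x))\<^sup>2) \<le> 2 * ennreal ((cmod (f x))\<^sup>2)
        + 2 * ennreal ((cmod (g x))\<^sup>2)"
      by (simp add: ennreal_plus ennreal_mult)
  qed
  also have "\<dots> = 2 * L2_sq M f + 2 * L2_sq M g"
    unfolding L2_sq_def using assms by (subst nn_integral_add) (auto simp: nn_integral_cmult)
  finally show ?thesis .
qed

lemma L2_sq_cmult:
  assumes "f \<in> borel_measurable M"
  shows "L2_sq M (\<lambda>x. c * f x) = ennreal ((cmod c)\<^sup>2) * L2_sq M f"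
  unfolding L2_sq_def using assms
  by (subst nn_integral_cmult[symmetric]) (auto simp: norm_mult power_mult_distrib ennreal_mult)

lemma L2_sq_uminus: "L2_sq M (\<lambda>x. - f x) = L2_sq M f"
  unfolding L2_sq_def by simp

lemma L2_sq_indicator_le: "L2_sq M (\<lambda>x. indicator S x * f x) \<le> L2_sq M f"
  unfolding L2_sq_def by (intro nn_integral_mono ennreal_leI) (auto simp: indicator_def)

lemma ennreal_eq_0_if_less_all_pos:
  assumes "\<forall>e>0. (x::ennreal) < ennreal e" shows "x = 0"
proof -
  have "x \<le> 0 + ennreal e" if "0 < e" for e using assms that by (simp add: less_imp_le)
  hence "x \<le> 0" by (rule ennreal_le_epsilon) auto
  thus ?thesis by simp
qed

lemma ennreal_double_add_less:
  assumes "X < ennreal a" "Y \<le> ennreal a" "0 \<le> a"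
  shows "2 * X + 2 * Y < ennreal (4 * a)"
proof -
  obtain x where x: "X = ennreal x" "0 \<le> x" "x < a"
    using assms(1) by (cases X) (auto simp: ennreal_less_iff)
  obtain y where y: "Y = ennreal y" "0 \<le> y" "y \<le> a"
    using assms(2,3) by (cases Y) (auto simp: ennreal_le_iff top_unique)
  have "2 * X + 2 * Y = ennreal (2*x + 2*y)" using x y by (simp add: ennreal_plus ennreal_mult)
  also have "\<dots> < ennreal (4*a)" using x y by (subst ennreal_less_iff) auto
  finally show ?thesis .
qed

lemma borel_measurable_span_sum:
  fixes g :: "nat \<Rightarrow> 'a \<Rightarrow> complex"
  shows "\<forall>i<n. g i \<in> borel_measurable M \<Longrightarrow> (\<lambda>x. \<Sum>i<n. c i * g i x) \<in> borel_measurable M"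
  by (intro borel_measurable_sum) (auto intro!: borel_measurable_times)

lemma approx_by_span_drop_dependent:
  assumes fm: "f \<in> borel_measurable M" and gm: "\<forall>i\<le>n. g i \<in> borel_measurable M"
    and dep: "L2_sq M (\<lambda>x. g n x - (\<Sum>i<n. c' i * g i x)) = 0"
    and approx: "approx_by_span M g (Suc n) f"
  shows "approx_by_span M g n f"
  unfolding approx_by_span_def
proof (intro allI impI)
  fix e :: real assume e: "e > 0"
  obtain c where c: "L2_sq M (\<lambda>x. f x - (\<Sum>i<Suc n. c i * g i x)) < ennreal (e/4)"
    using approx e unfolding approx_by_span_def by (meson divide_pos_pos zero_less_numeral)
  define d where "d = (\<lambda>i. c i + c n * c' i)"
  have eq: "f x - (\<Sum>i<n. d i * g i x)
      = (f x - (\<Sum>i<Suc n. c i * g i x)) + c n * (g n x - (\<Sum>i<n. c' i * g i x))" for x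
    unfolding d_def sum.lessThan_Suc by (simp add: sum.distrib algebra_simps sum_distrib_left)
  have m1: "(\<lambda>x. f x - (\<Sum>i<Suc n. c i * g i x)) \<in> borel_measurable M"
    using fm borel_measurable_span_sum[of "Suc n" g M c] gm by (auto simp: less_Suc_eq_le)
  have m2: "(\<lambda>x. g n x - (\<Sum>i<n. c' i * g i x)) \<in> borel_measurable M"
    using borel_measurable_span_sum[of n g M c'] gm by auto
  have "L2_sq M (\<lambda>x. f x - (\<Sum>i<n. d i * g i x))
      \<le> 2 * L2_sq M (\<lambda>x. f x - (\<Sum>i<Suc n. c i * g i x))
        + 2 * L2_sq M (\<lambda>x. c n * (g n x - (\<Sum>i<n. c' i * g i x)))"
    unfolding eq using m1 m2 by (intro L2_sq_add_le) auto
  also have "\<dots> = 2 * L2_sq M (\<lambda>x. f x - (\<Sum>i<Suc n. c i * g i x)) + 2 * 0"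
    using L2_sq_cmult[OF m2, of "c n"] dep by simp
  also have "\<dots> < ennreal (4 * (e/4))"
    by (rule ennreal_double_add_less[OF c]) (use e in auto)
  finally show "\<exists>d. L2_sq M (\<lambda>x. f x - (\<Sum>i<n. d i * g i x)) < ennreal e" by auto
qed

lemma approx_top_coeff_bounded:
  assumes fm: "f \<in> borel_measurable M" and fN: "L2_sq M f < \<infinity>"
    and gm: "\<forall>i\<le>n. g i \<in> borel_measurable M"
    and e0: "e0 > 0" "\<And>c'. ennreal e0 \<le> L2_sq M (\<lambda>x. g n x - (\<Sum>i<n. c' i * g i x))"
  obtains B where "\<And>c. L2_sq M (\<lambda>x. f x - (\<Sum>i<Suc n. c i * g i x)) < 1 \<Longrightarrow> cmod (c n) \<le> B"
proof -
  define B where "B = enn2real (2 * L2_sq M f + 2)"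
  have Bfin: "2 * L2_sq M f + 2 = ennreal B" using fN unfolding B_def
    by (simp add: ennreal_mult_less_top ennreal_enn2real_if ennreal_mult_eq_top_iff)
  have "(cmod (c n))\<^sup>2 * e0 \<le> B" if c: "L2_sq M (\<lambda>x. f x - (\<Sum>i<Suc n. c i * g i x)) < 1" for c
  proof (cases "c n = 0")
    case True then show ?thesis by (simp add: B_def)
  next
    case False
    define c' where "c' = (\<lambda>i. - c i / c n)"
    have eq: "(\<Sum>i<Suc n. c i * g i x) = c n * (g n x - (\<Sum>i<n. c' i * g i x))" for x
      unfolding sum.lessThan_Suc c'_def using False
      by (simp add: algebra_simps sum_distrib_left sum_subtractf sum_negf)
    have m2: "(\<lambda>x. g n x - (\<Sum>i<n. c' i * g i x)) \<in> borel_measurable M"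
      using borel_measurable_span_sum[of n g M c'] gm by auto
    have m1: "(\<lambda>x. f x - (\<Sum>i<Suc n. c i * g i x)) \<in> borel_measurable M"
      using fm borel_measurable_span_sum[of "Suc n" g M c] gm by (auto simp: less_Suc_eq_le)
    have "ennreal ((cmod (c n))\<^sup>2) * ennreal e0 \<le> L2_sq M (\<lambda>x. \<Sum>i<Suc n. c i * g i x)"
      unfolding eq L2_sq_cmult[OF m2] by (intro mult_left_mono e0) auto
    also have "\<dots> = L2_sq M (\<lambda>x. f x + - (f x - (\<Sum>i<Suc n. c i * g i x)))" by simp
    also have "\<dots> \<le> 2 * L2_sq M f + 2 * L2_sq M (\<lambda>x. - (f x - (\<Sum>i<Suc n. c i * g i x)))"
      by (rule L2_sq_add_le[OF fm borel_measurable_uminus[OF m1]])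
    also have "\<dots> \<le> 2 * L2_sq M f + 2 * 1"
      using c unfolding L2_sq_uminus by (intro add_left_mono mult_left_mono) auto
    also have "\<dots> = ennreal B" using Bfin by simp
    finally have "ennreal ((cmod (c n))\<^sup>2 * e0) \<le> ennreal B" using e0 by (simp add: ennreal_mult)
    thus ?thesis by (simp add: ennreal_le_iff B_def)
  qed
  hence "cmod (c n) \<le> sqrt (B / e0)"
    if "L2_sq M (\<lambda>x. f x - (\<Sum>i<Suc n. c i * g i x)) < 1" for c
    using that e0 by (simp add: pos_le_divide_eq real_le_rsqrt)
  thus ?thesis using that by blast
qed

lemma approx_by_span_limit_coeff:
  assumes fm: "f \<in> borel_measurable M" and gm: "\<forall>i\<le>n. g i \<in> borel_measurable M"
    and gN: "L2_sq M (g n) < \<infinity>"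
    and cs: "\<And>k. L2_sq M (\<lambda>x. f x - (\<Sum>i<Suc n. cs k i * g i x)) < ennreal (1 / Suc k)"
    and r: "strict_mono r" and lim: "(\<lambda>k. cs (r k) n) \<longlonglongrightarrow> l"
  shows "approx_by_span M g n (\<lambda>x. f x - l * g n x)"
  unfolding approx_by_span_def
proof (intro allI impI)
  fix e :: real assume e: "e > 0"
  define Nh where "Nh = enn2real (L2_sq M (g n))"
  have Nh: "L2_sq M (g n) = ennreal Nh" "Nh \<ge> 0"
    using gN unfolding Nh_def by (auto simp: ennreal_enn2real_if)
  define \<delta> where "\<delta> = sqrt (e / (4 * (Nh + 1)))"
  have \<delta>: "\<delta> > 0" "\<delta>\<^sup>2 = e / (4 * (Nh + 1))" unfolding \<delta>_def using e Nh by auto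
  obtain j0 :: nat where j0: "1 / real (Suc j0) < e/4"
    using reals_Archimedean[of "e/4"] e by (auto simp: inverse_eq_divide)
  have "\<forall>\<^sub>F j in sequentially. dist (cs (r j) n) l < \<delta> \<and> j \<ge> j0"
    using lim \<delta>(1) unfolding tendsto_iff by (auto simp: eventually_conj_iff eventually_ge_at_top)
  then obtain j where j1: "dist (cs (r j) n) l < \<delta>" and j2: "j \<ge> j0"
    unfolding eventually_sequentially by blast
  define c where "c = cs (r j)"
  have eq: "f x - l * g n x - (\<Sum>i<n. c i * g i x)
      = (f x - (\<Sum>i<Suc n. c i * g i x)) + (c n - l) * g n x" for x
    unfolding sum.lessThan_Suc by (simp add: algebra_simps)
  have m1: "(\<lambda>x. f x - (\<Sum>i<Suc n. c i * g i x)) \<in> borel_measurable M"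
    using fm borel_measurable_span_sum[of "Suc n" g M c] gm by (auto simp: less_Suc_eq_le)
  have "1 / real (Suc (r j)) \<le> 1 / Suc j0"
    using j2 seq_suble[OF r, of j] by (simp add: frac_le)
  hence "ennreal (1 / real (Suc (r j))) \<le> ennreal (e/4)" using j0 by (intro ennreal_leI) linarith
  hence X: "L2_sq M (\<lambda>x. f x - (\<Sum>i<Suc n. c i * g i x)) < ennreal (e/4)"
    using less_le_trans[OF cs[of "r j"]] unfolding c_def by blast
  have "(cmod (c n - l))\<^sup>2 * Nh \<le> \<delta>\<^sup>2 * (Nh + 1)"
    using j1 Nh unfolding c_def dist_norm by (intro mult_mono power_mono) auto
  also have "\<dots> = e/4" using \<delta>(2) Nh by (simp add: field_simps)
  finally have Y: "L2_sq M (\<lambda>x. (c n - l) * g n x) \<le> ennreal (e/4)"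
    unfolding L2_sq_cmult[OF gm[rule_format, OF order_refl]] Nh using Nh
    by (simp add: ennreal_mult[symmetric] ennreal_leI)
  have "L2_sq M (\<lambda>x. f x - l * g n x - (\<Sum>i<n. c i * g i x))
      \<le> 2 * L2_sq M (\<lambda>x. f x - (\<Sum>i<Suc n. c i * g i x)) + 2 * L2_sq M (\<lambda>x. (c n - l) * g n x)"
    unfolding eq using m1 gm by (intro L2_sq_add_le) auto
  also have "\<dots> < ennreal (4 * (e/4))" by (rule ennreal_double_add_less[OF X Y]) (use e in auto)
  finally show "\<exists>d. L2_sq M (\<lambda>x. f x - l * g n x - (\<Sum>i<n. d i * g i x)) < ennreal e" by auto
qed

lemma AE_eq_0_if_L2_sq_eq_0:
  assumes "f \<in> borel_measurable M" "L2_sq M f = 0"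
  shows "AE x in M. f x = 0"
proof -
  have "(\<lambda>x. ennreal ((cmod (f x))\<^sup>2)) \<in> borel_measurable M" using assms(1) by measurable
  with assms(2) have "AE x in M. ennreal ((cmod (f x))\<^sup>2) = 0"
    unfolding L2_sq_def by (subst (asm) nn_integral_0_iff_AE)
  thus ?thesis by eventually_elim simp
qed

text \<open>Compactness step: if \<open>g n\<close> keeps positive distance from the span of the earlier
  functions, the top coefficients of good approximations of \<open>f\<close> stay bounded, and the limit
  \<open>l\<close> of a convergent subsequence of them leaves \<open>f - l g n\<close> approximable by the smaller span.\<close>
lemma approx_by_span_split_top:
  assumes fm: "f \<in> borel_measurable M" and fN: "L2_sq M f < \<infinity>"
    and gm: "\<forall>i\<le>n. g i \<in> borel_measurable M" and gN: "L2_sq M (g n) < \<infinity>"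
    and indep: "\<not> approx_by_span M g n (g n)" and approx: "approx_by_span M g (Suc n) f"
  obtains l where "approx_by_span M g n (\<lambda>x. f x - l * g n x)"
proof -
  obtain e0 where e0: "e0 > 0" "\<And>c'. ennreal e0 \<le> L2_sq M (\<lambda>x. g n x - (\<Sum>i<n. c' i * g i x))"
    using indep unfolding approx_by_span_def by (auto simp: not_less)
  obtain B where B: "\<And>c. L2_sq M (\<lambda>x. f x - (\<Sum>i<Suc n. c i * g i x)) < 1 \<Longrightarrow> cmod (c n) \<le> B"
    using approx_top_coeff_bounded[OF fm fN gm e0] by blast
  have "\<forall>k. \<exists>c. L2_sq M (\<lambda>x. f x - (\<Sum>i<Suc n. c i * g i x)) < ennreal (1 / Suc k)"
    using approx unfolding approx_by_span_def by auto
  then obtain cs where cs: "\<And>k. L2_sq M (\<lambda>x. f x - (\<Sum>i<Suc n. cs k i * g i x)) < ennreal (1 / Suc k)"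
    by metis
  have "cs k n \<in> cball 0 B" for k
    using B[OF less_le_trans[OF cs[of k]]] by (simp add: ennreal_le_1)
  then obtain l r where r: "strict_mono r" and lim: "((\<lambda>k. cs k n) \<circ> r) \<longlonglongrightarrow> l"
    using compact_imp_seq_compact[OF compact_cball, unfolded seq_compact_def] by metis
  show ?thesis
    using approx_by_span_limit_coeff[OF fm gm gN cs r] lim that by (auto simp: o_def)
qed

lemma approx_by_span_exact:
  assumes "\<forall>i<n. g i \<in> borel_measurable M" "\<forall>i<n. L2_sq M (g i) < \<infinity>"
    and "f \<in> borel_measurable M" "L2_sq M f < \<infinity>" "approx_by_span M g n f"
  shows "\<exists>c. L2_sq M (\<lambda>x. f x - (\<Sum>i<n. c i * g i x)) = 0"
  using assms
proof (induction n arbitrary: f)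
  case 0
  then show ?case using ennreal_eq_0_if_less_all_pos unfolding approx_by_span_def by auto
next
  case (Suc n)
  note fm = Suc.prems(3) and fN = Suc.prems(4) and approx = Suc.prems(5)
  have gm: "\<forall>i<n. g i \<in> borel_measurable M" "\<forall>i<n. L2_sq M (g i) < \<infinity>"
    and gm': "\<forall>i\<le>n. g i \<in> borel_measurable M"
    and hm: "g n \<in> borel_measurable M" and hN: "L2_sq M (g n) < \<infinity>"
    using Suc.prems(1,2) by (auto simp: less_Suc_eq_le)
  have extend: "\<exists>c. L2_sq M (\<lambda>x. f x - (\<Sum>i<Suc n. c i * g i x)) = 0"
    if "L2_sq M (\<lambda>x. f x - l * g n x - (\<Sum>i<n. c i * g i x)) = 0" for l c
  proof -
    have "(\<Sum>i<n. (c(n:=l)) i * g i x) = (\<Sum>i<n. c i * g i x)" for x by (intro sum.cong) auto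
    hence "f x - (\<Sum>i<Suc n. (c(n:=l)) i * g i x) = f x - l * g n x - (\<Sum>i<n. c i * g i x)" for x
      by simp
    thus ?thesis using that by (intro exI[of _ "c(n:=l)"]) (simp only:)
  qed
  show ?case
  proof (cases "approx_by_span M g n (g n)")
    case True
    then obtain c' where "L2_sq M (\<lambda>x. g n x - (\<Sum>i<n. c' i * g i x)) = 0"
      using Suc.IH[OF gm hm hN] by blast
    from approx_by_span_drop_dependent[OF fm gm' this approx]
    obtain c where "L2_sq M (\<lambda>x. f x - (\<Sum>i<n. c i * g i x)) = 0"
      using Suc.IH[OF gm fm fN] by blast
    thus ?thesis using extend[of 0 c] by simp
  next
    case False
    then obtain l where l: "approx_by_span M g n (\<lambda>x. f x - l * g n x)"
      using approx_by_span_split_top[OF fm fN gm' hN _ approx] by blast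
    have fl: "(\<lambda>x. f x - l * g n x) \<in> borel_measurable M" using fm hm by auto
    have "L2_sq M (\<lambda>x. f x + (- l) * g n x) \<le> 2 * L2_sq M f + 2 * L2_sq M (\<lambda>x. (- l) * g n x)"
      using fm hm by (intro L2_sq_add_le) auto
    also have "\<dots> < \<infinity>" using fN hN unfolding L2_sq_cmult[OF hm] by (simp add: ennreal_mult_less_top)
    finally have flN: "L2_sq M (\<lambda>x. f x - l * g n x) < \<infinity>" by simp
    show ?thesis using Suc.IH[OF gm fl flN l] extend by blast
  qed
qed

lemma approx_by_span_AE_eq:
  assumes "\<forall>i<n. g i \<in> borel_measurable M" "\<forall>i<n. L2_sq M (g i) < \<infinity>"
    and "f \<in> borel_measurable M" "L2_sq M f < \<infinity>" "approx_by_span M g n f"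
  shows "\<exists>c. AE x in M. f x = (\<Sum>i<n. c i * g i x)"
proof -
  obtain c where "L2_sq M (\<lambda>x. f x - (\<Sum>i<n. c i * g i x)) = 0"
    using approx_by_span_exact[OF assms] by blast
  moreover have "(\<lambda>x. f x - (\<Sum>i<n. c i * g i x)) \<in> borel_measurable M"
    using assms(1,3) borel_measurable_span_sum[of n g M c] by auto
  ultimately have "AE x in M. f x - (\<Sum>i<n. c i * g i x) = 0"
    by (intro AE_eq_0_if_L2_sq_eq_0)
  hence "AE x in M. f x = (\<Sum>i<n. c i * g i x)" by eventually_elim simp
  thus ?thesis by blast
qed

lemma indicator_mult_L2:
  assumes "S \<in> sets M" "f \<in> borel_measurable M" "L2_sq M f < \<infinity>"
  shows "(\<lambda>x. indicator S x * f x) \<in> borel_measurable M"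
    and "L2_sq M (\<lambda>x. indicator S x * f x) < \<infinity>"
  using assms le_less_trans[OF L2_sq_indicator_le] by auto

section \<open>Digits, truncations and arithmetic\<close>

lemma qp_vanish_below: "x \<in> qp p \<Longrightarrow> \<exists>g. \<forall>j<g. x j = 0" unfolding qp_def by auto
lemma qp_digit_less: "x \<in> qp p \<Longrightarrow> x j < p" unfolding qp_def by auto

lemma qp_finite_support_below: assumes "x \<in> qp p" shows "finite {j. j < n \<and> x j \<noteq> 0}"
proof -
  obtain g where g: "\<forall>j<g. x j = 0" using qp_vanish_below[OF assms] by blast
  have "{j. j < n \<and> x j \<noteq> 0} \<subseteq> {g..<n}" using g by (auto simp: not_less[symmetric])
  thus ?thesis by (rule finite_subset) simp
qed

lemma qp_trunc_succ:
  assumes "x \<in> qp p"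
  shows "qp_trunc p x (n+1) = qp_trunc p x n + real (x n) * real p powi n"
proof (cases "x n = 0")
  case True
  hence "{j. j < n+1 \<and> x j \<noteq> 0} = {j. j < n \<and> x j \<noteq> 0}" by (auto simp: zless_add1_eq le_less)
  thus ?thesis using True unfolding qp_trunc_def by simp
next
  case False
  hence "{j. j < n+1 \<and> x j \<noteq> 0} = insert n {j. j < n \<and> x j \<noteq> 0}" by (auto simp: zless_add1_eq)
  thus ?thesis using qp_finite_support_below[OF assms, of n] unfolding qp_trunc_def
    by (simp add: add.commute)
qed

lemma qp_trunc_vanish: "\<forall>j<g. x j = 0 \<Longrightarrow> n \<le> g \<Longrightarrow> qp_trunc p x n = 0"
  unfolding qp_trunc_def by (rule sum.neutral) auto

lemma qp_trunc_zero[simp]: "qp_trunc p qp_zero n = 0"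
  unfolding qp_trunc_def qp_zero_def by simp

lemma qp_zero_in_qp: "p > 0 \<Longrightarrow> qp_zero \<in> qp p" unfolding qp_def qp_zero_def by auto

lemma qp_trunc_bounds:
  assumes p: "p \<ge> 2" and x: "x \<in> qp p"
  shows "0 \<le> qp_trunc p x n \<and> qp_trunc p x n < real p powi n"
proof -
  obtain g where g: "\<forall>j<g. x j = 0" using qp_vanish_below[OF x] by blast
  define g' where "g' = min g n"
  have g': "\<forall>j<g'. x j = 0" "g' \<le> n" using g unfolding g'_def by auto
  have "g' \<le> n" by fact
  thus ?thesis
  proof (induction n rule: int_ge_induct)
    case base
    then show ?case using qp_trunc_vanish[OF g'(1)] p by simp
  next
    case (step i)
    have xi: "real (x i) \<le> real p - 1" using qp_digit_less[OF x, of i] by linarith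
    have pi: "real p powi i > 0" using p by simp
    have "qp_trunc p x (i+1) = qp_trunc p x i + real (x i) * real p powi i"
      by (rule qp_trunc_succ[OF x])
    moreover have "real (x i) * real p powi i \<le> (real p - 1) * real p powi i"
      using xi pi by (intro mult_right_mono) auto
    moreover have "real p powi (i+1) = real p * real p powi i" using p
      by (simp add: power_int_add)
    ultimately show ?case using step.IH pi by (auto simp: algebra_simps)
  qed
qed

definition pow_multiple :: "nat \<Rightarrow> int \<Rightarrow> real \<Rightarrow> bool" where
  "pow_multiple p m r \<longleftrightarrow> (\<exists>k::int. r = of_int k * real p powi m)"

lemma pow_multiple_add:
  assumes "pow_multiple p m a" "pow_multiple p m b" shows "pow_multiple p m (a + b)"
proof -
  obtain k l where "a = of_int k * real p powi m" "b = of_int l * real p powi m"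
    using assms unfolding pow_multiple_def by blast
  hence "a + b = of_int (k + l) * real p powi m" by (simp add: algebra_simps)
  thus ?thesis unfolding pow_multiple_def by blast
qed
lemma pow_multiple_uminus: "pow_multiple p m a \<Longrightarrow> pow_multiple p m (- a)"
  unfolding pow_multiple_def by (auto intro: exI[of _ "- _"])
lemma pow_multiple_diff: "pow_multiple p m a \<Longrightarrow> pow_multiple p m b \<Longrightarrow> pow_multiple p m (a - b)"
  using pow_multiple_add pow_multiple_uminus by fastforce
lemma pow_multiple_0: "pow_multiple p m 0" unfolding pow_multiple_def by (auto intro: exI[of _ 0])
lemma pow_multiple_mono:
  assumes "p \<ge> 2" "pow_multiple p n a" "m \<le> n" shows "pow_multiple p m a"
proof -
  obtain k where k: "a = of_int k * real p powi n" using assms unfolding pow_multiple_def by blast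
  have "real p powi n = real p ^ nat (n - m) * real p powi m"
    using assms by (simp add: power_int_add[symmetric] power_int_of_nat[symmetric])
  hence "a = of_int (k * p ^ nat (n-m)) * real p powi m" using k by simp
  thus ?thesis unfolding pow_multiple_def by blast
qed

lemma qp_trunc_diff_multiple:
  assumes p: "p \<ge> 2" and x: "x \<in> qp p" and mn: "m \<le> n"
  shows "pow_multiple p m (qp_trunc p x n - qp_trunc p x m)"
  using mn
proof (induction n rule: int_ge_induct)
  case base then show ?case by (simp add: pow_multiple_0)
next
  case (step i)
  have "pow_multiple p i (real (x i) * real p powi i)" unfolding pow_multiple_def
    by (auto intro: exI[of _ "int (x i)"])
  hence "pow_multiple p m (real (x i) * real p powi i)" using pow_multiple_mono[OF p _ step.hyps]
    by blast
  hence "pow_multiple p m ((qp_trunc p x i - qp_trunc p x m) + real (x i) * real p powi i)"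
    by (rule pow_multiple_add[OF step.IH])
  moreover have "qp_trunc p x (i+1) - qp_trunc p x m = (qp_trunc p x i - qp_trunc p x m)
      + real (x i) * real p powi i"
    using qp_trunc_succ[OF x, of i] by simp
  ultimately show ?case by metis
qed

lemma rmod_bounds: assumes "M > 0" shows "0 \<le> rmod a M" "rmod a M < M"
proof -
  have "of_int \<lfloor>a/M\<rfloor> * M \<le> a" "a < (of_int \<lfloor>a/M\<rfloor> + 1) * M"
    using floor_divide_lower[OF assms] floor_divide_upper[OF assms] by auto
  hence "M * of_int \<lfloor>a/M\<rfloor> \<le> a" "a < M * of_int \<lfloor>a/M\<rfloor> + M" using assms
    by (auto simp: algebra_simps)
  thus "0 \<le> rmod a M" "rmod a M < M" unfolding rmod_def by auto
qed

lemma rmod_eqI: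
  assumes "M > 0" "0 \<le> b" "b < M" "a = b + of_int k * M"
  shows "rmod a M = b"
proof -
  have "a / M = b / M + of_int k" using assms by (simp add: field_simps)
  moreover have "0 \<le> b / M" "b / M < 1" using assms by auto
  ultimately have "\<lfloor>a/M\<rfloor> = k" by (simp add: floor_eq_iff)
  thus ?thesis unfolding rmod_def using assms by simp
qed

lemma rmod_diff_multiple: "pow_multiple p m (a - rmod a (real p powi m))"
  unfolding pow_multiple_def rmod_def by (auto intro: exI[of _ "\<lfloor>_\<rfloor>"])

lemma rmod_zero[simp]: "rmod 0 M = 0" unfolding rmod_def by simp

lemma rmod_eq_if_multiple:
  assumes p: "p \<ge> 2" and "0 \<le> b" "b < real p powi m" "pow_multiple p m (a - b)"
  shows "rmod a (real p powi m) = b"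
proof -
  obtain k where "a - b = of_int k * real p powi m" using assms unfolding pow_multiple_def by blast
  thus ?thesis using assms by (intro rmod_eqI[where k=k]) auto
qed

lemma qp_trunc_rmod:
  assumes p: "p \<ge> 2" and x: "x \<in> qp p" and km: "k \<le> m"
  shows "qp_trunc p x k = rmod (qp_trunc p x m) (real p powi k)"
  using qp_trunc_bounds[OF p x, of k] qp_trunc_diff_multiple[OF p x km]
  by (intro rmod_eq_if_multiple[OF p, symmetric]) auto

lemma qp_trunc_eq_iff:
  assumes p: "p \<ge> 2" and x: "x \<in> qp p" and y: "y \<in> qp p"
  shows "(\<forall>j<m. x j = y j) \<longleftrightarrow> qp_trunc p x m = qp_trunc p y m"
proof
  assume "\<forall>j<m. x j = y j"
  hence "{j. j < m \<and> x j \<noteq> 0} = {j. j < m \<and> y j \<noteq> 0}" by auto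
  thus "qp_trunc p x m = qp_trunc p y m" unfolding qp_trunc_def using \<open>\<forall>j<m. x j = y j\<close>
    by (intro sum.cong) auto
next
  assume eq: "qp_trunc p x m = qp_trunc p y m"
  show "\<forall>j<m. x j = y j"
  proof (intro allI impI)
    fix j assume "j < m"
    hence "j + 1 \<le> m" "j \<le> m" by auto
    have e1: "qp_trunc p x (j+1) = qp_trunc p y (j+1)"
      using qp_trunc_rmod[OF p x \<open>j+1 \<le> m\<close>] qp_trunc_rmod[OF p y \<open>j+1 \<le> m\<close>] eq by simp
    have e2: "qp_trunc p x j = qp_trunc p y j"
      using qp_trunc_rmod[OF p x \<open>j \<le> m\<close>] qp_trunc_rmod[OF p y \<open>j \<le> m\<close>] eq by simp
    have "real (x j) * real p powi j = real (y j) * real p powi j"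
      using qp_trunc_succ[OF x, of j] qp_trunc_succ[OF y, of j] e1 e2 by linarith
    moreover have "real p powi j \<noteq> 0" using p by simp
    ultimately have "real (x j) = real (y j)" using p by simp
    thus "x j = y j" by simp
  qed
qed

text \<open>A sequence \<open>R\<close> with \<open>R n \<equiv> R m (mod p\<^sup>m \<int>)\<close> for \<open>m \<le> n\<close> is a compatible
  system of residues; its digits form the p-adic number whose truncations are the
  \<open>R n mod p\<^sup>n\<close>. Both \<open>qp_diff\<close> and the sum \<open>qp_add\<close> are of this form.\<close>
definition residue_digits :: "nat \<Rightarrow> (int \<Rightarrow> real) \<Rightarrow> (int \<Rightarrow> nat)" where
  "residue_digits p R = (\<lambda>j. nat \<lfloor>rmod (R (j+1)) (real p powi (j+1)) / real p powi j\<rfloor>)"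

lemma residue_digits_in_qp:
  assumes p: "p \<ge> 2" and R0: "\<And>n. n \<le> g \<Longrightarrow> R n = 0"
  shows "residue_digits p R \<in> qp p"
proof -
  have Pp: "real p powi k > 0" for k using p by simp
  have "residue_digits p R j < p" for j
  proof -
    let ?r = "rmod (R (j+1)) (real p powi (j+1))"
    have r: "0 \<le> ?r" "?r < real p powi (j+1)" using rmod_bounds[OF Pp] by auto
    have "real p powi (j+1) = real p * real p powi j" using p by (simp add: power_int_add)
    hence "?r / real p powi j < real p" using r Pp[of j] by (simp add: divide_less_eq)
    hence "\<lfloor>?r / real p powi j\<rfloor> < int p" by linarith
    thus ?thesis unfolding residue_digits_def using p by linarith
  qed
  moreover have "\<forall>j<g. residue_digits p R j = 0" using R0 by (simp add: residue_digits_def)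
  ultimately show ?thesis unfolding qp_def by blast
qed

lemma qp_trunc_residue_digits:
  assumes p: "p \<ge> 2" and R0: "\<And>n. n \<le> g \<Longrightarrow> R n = 0"
    and Rpm: "\<And>m n. m \<le> n \<Longrightarrow> pow_multiple p m (R n - R m)"
  shows "qp_trunc p (residue_digits p R) n = rmod (R n) (real p powi n)"
proof -
  let ?d = "residue_digits p R"
  have Pp: "real p powi k > 0" for k using p by simp
  have dq: "?d \<in> qp p" by (rule residue_digits_in_qp[OF p R0])
  have d0: "\<forall>j<g. ?d j = 0" using R0 by (simp add: residue_digits_def)
  have "qp_trunc p ?d n = rmod (R n) (real p powi n)" if "g \<le> n"
    using that
  proof (induction n rule: int_ge_induct)
    case base
    then show ?case using qp_trunc_vanish[OF d0, of g] R0[of g] by simp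
  next
    case (step i)
    define r' where "r' = rmod (R (i+1)) (real p powi (i+1))"
    define q where "q = \<lfloor>r' / real p powi i\<rfloor>"
    have "0 \<le> r'" unfolding r'_def using rmod_bounds[OF Pp] by auto
    hence dq': "real (?d i) = of_int q" using Pp[of i] unfolding q_def r'_def residue_digits_def
      by simp
    have eqm: "r' - of_int q * real p powi i = rmod r' (real p powi i)"
      unfolding rmod_def q_def by simp
    have "rmod (R i) (real p powi i) = r' - of_int q * real p powi i"
    proof (rule rmod_eq_if_multiple[OF p])
      show "0 \<le> r' - of_int q * real p powi i" "r' - of_int q * real p powi i < real p powi i"
        unfolding eqm using rmod_bounds[OF Pp] by auto
      have a1: "pow_multiple p i (R (i+1) - R i)" by (rule Rpm) simp
      have a2: "pow_multiple p i (R (i+1) - r')" unfolding r'_def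
        by (rule pow_multiple_mono[OF p rmod_diff_multiple]) simp
      have a3: "pow_multiple p i (of_int q * real p powi i)" unfolding pow_multiple_def by blast
      have "R i - (r' - of_int q * real p powi i)
          = (R (i+1) - r') - (R (i+1) - R i) + of_int q * real p powi i"
        by simp
      thus "pow_multiple p i (R i - (r' - of_int q * real p powi i))"
        using pow_multiple_add[OF pow_multiple_diff[OF a2 a1] a3] by (simp only:)
    qed
    then show ?case using qp_trunc_succ[OF dq, of i] step.IH dq' unfolding r'_def by simp
  qed
  moreover have "qp_trunc p ?d n = rmod (R n) (real p powi n)" if "n \<le> g"
    using qp_trunc_vanish[OF d0 that] R0[OF that] by simp
  ultimately show ?thesis by (meson linear)
qed

definition qp_add :: "nat \<Rightarrow> (int \<Rightarrow> nat) \<Rightarrow> (int \<Rightarrow> nat) \<Rightarrow> (int \<Rightarrow> nat)" where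
  "qp_add p x y = residue_digits p (\<lambda>n. qp_trunc p x n + qp_trunc p y n)"

lemma qp_diff_eq_residue_digits:
  "qp_diff p x y = residue_digits p (\<lambda>n. qp_trunc p x n - qp_trunc p y n)"
  unfolding qp_diff_def residue_digits_def ..

lemma qp_trunc_vanish_common:
  assumes x: "x \<in> qp p" and y: "y \<in> qp p"
  obtains g where "\<And>n. n \<le> g \<Longrightarrow> qp_trunc p x n = 0 \<and> qp_trunc p y n = 0"
proof -
  obtain gx gy where "\<forall>j<gx. x j = 0" "\<forall>j<gy. y j = 0"
    using qp_vanish_below[OF x] qp_vanish_below[OF y] by blast
  hence "\<forall>j<min gx gy. x j = 0" "\<forall>j<min gx gy. y j = 0" by auto
  thus ?thesis using that qp_trunc_vanish by blast
qed

lemma qp_diff_digits: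
  assumes p: "p \<ge> 2" and x: "x \<in> qp p" and y: "y \<in> qp p"
  shows "qp_diff p x y \<in> qp p"
    and "qp_trunc p (qp_diff p x y) n = rmod (qp_trunc p x n - qp_trunc p y n) (real p powi n)"
proof -
  obtain g where "\<And>n. n \<le> g \<Longrightarrow> qp_trunc p x n = 0 \<and> qp_trunc p y n = 0"
    using qp_trunc_vanish_common[OF x y] by blast
  hence R0: "\<And>n. n \<le> g \<Longrightarrow> qp_trunc p x n - qp_trunc p y n = 0" by simp
  have Rpm: "pow_multiple p m ((qp_trunc p x n - qp_trunc p y n) - (qp_trunc p x m - qp_trunc p y m))"
    if "m \<le> n" for m n
    using pow_multiple_diff[OF qp_trunc_diff_multiple[OF p x that] qp_trunc_diff_multiple[OF p y that]]
    by (simp add: algebra_simps)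
  show "qp_diff p x y \<in> qp p"
    unfolding qp_diff_eq_residue_digits by (rule residue_digits_in_qp[OF p R0])
  show "qp_trunc p (qp_diff p x y) n = rmod (qp_trunc p x n - qp_trunc p y n) (real p powi n)"
    unfolding qp_diff_eq_residue_digits by (rule qp_trunc_residue_digits[OF p R0 Rpm])
qed

lemma qp_add_digits:
  assumes p: "p \<ge> 2" and x: "x \<in> qp p" and y: "y \<in> qp p"
  shows "qp_add p x y \<in> qp p"
    and "qp_trunc p (qp_add p x y) n = rmod (qp_trunc p x n + qp_trunc p y n) (real p powi n)"
proof -
  obtain g where "\<And>n. n \<le> g \<Longrightarrow> qp_trunc p x n = 0 \<and> qp_trunc p y n = 0"
    using qp_trunc_vanish_common[OF x y] by blast
  hence R0: "\<And>n. n \<le> g \<Longrightarrow> qp_trunc p x n + qp_trunc p y n = 0" by simp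
  have Rpm: "pow_multiple p m ((qp_trunc p x n + qp_trunc p y n) - (qp_trunc p x m + qp_trunc p y m))"
    if "m \<le> n" for m n
    using pow_multiple_add[OF qp_trunc_diff_multiple[OF p x that] qp_trunc_diff_multiple[OF p y that]]
    by (simp add: algebra_simps)
  show "qp_add p x y \<in> qp p"
    unfolding qp_add_def by (rule residue_digits_in_qp[OF p R0])
  show "qp_trunc p (qp_add p x y) n = rmod (qp_trunc p x n + qp_trunc p y n) (real p powi n)"
    unfolding qp_add_def by (rule qp_trunc_residue_digits[OF p R0 Rpm])
qed

lemma qp_diff_cylinder_iff:
  assumes p: "p \<ge> 2" and y: "y \<in> qp p" and a: "a \<in> qp p" and b: "b \<in> qp p"
  shows "(\<forall>j<m. qp_diff p y a j = b j) \<longleftrightarrow> (\<forall>j<m. y j = qp_add p b a j)"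
proof -
  let ?Y = "qp_trunc p y m" and ?A = "qp_trunc p a m" and ?B = "qp_trunc p b m" and ?M
      = "real p powi m"
  have "(\<forall>j<m. qp_diff p y a j = b j) \<longleftrightarrow> rmod (?Y - ?A) ?M = ?B"
    using qp_trunc_eq_iff[OF p qp_diff_digits(1)[OF p y a] b] qp_diff_digits(2)[OF p y a] by simp
  moreover have "(\<forall>j<m. y j = qp_add p b a j) \<longleftrightarrow> ?Y = rmod (?B + ?A) ?M"
    using qp_trunc_eq_iff[OF p y qp_add_digits(1)[OF p b a]] qp_add_digits(2)[OF p b a] by simp
  moreover have "rmod (?Y - ?A) ?M = ?B \<longleftrightarrow> ?Y = rmod (?B + ?A) ?M"
  proof
    assume h: "rmod (?Y - ?A) ?M = ?B"
    have "pow_multiple p m ((?Y - ?A) - ?B)" using rmod_diff_multiple[of p m "?Y - ?A"] h by simp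
    moreover have "(?B + ?A) - ?Y = - ((?Y - ?A) - ?B)" by simp
    ultimately have "pow_multiple p m ((?B + ?A) - ?Y)" using pow_multiple_uminus by metis
    thus "?Y = rmod (?B + ?A) ?M" using qp_trunc_bounds[OF p y, of m]
      by (intro rmod_eq_if_multiple[OF p, symmetric]) auto
  next
    assume h: "?Y = rmod (?B + ?A) ?M"
    have "pow_multiple p m ((?B + ?A) - ?Y)" using rmod_diff_multiple[of p m "?B + ?A"] h by simp
    moreover have "(?Y - ?A) - ?B = - ((?B + ?A) - ?Y)" by simp
    ultimately have "pow_multiple p m ((?Y - ?A) - ?B)" using pow_multiple_uminus by metis
    thus "rmod (?Y - ?A) ?M = ?B" using qp_trunc_bounds[OF p b, of m]
      by (intro rmod_eq_if_multiple[OF p]) auto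
  qed
  ultimately show ?thesis by simp
qed

lemma qp_zero_add:
  assumes p: "p \<ge> 2" and a: "a \<in> qp p"
  shows "qp_add p qp_zero a = a"
proof
  fix j
  have z: "qp_zero \<in> qp p" using qp_zero_in_qp p by simp
  have "qp_trunc p (qp_add p qp_zero a) (j+1) = qp_trunc p a (j+1)"
    unfolding qp_add_digits(2)[OF p z a] using qp_trunc_bounds[OF p a, of "j+1"]
    by (simp add: rmod_eq_if_multiple[OF p] pow_multiple_0)
  thus "qp_add p qp_zero a j = a j"
    using qp_trunc_eq_iff[OF p qp_add_digits(1)[OF p z a] a, of "j+1"] by simp
qed

lemma qp_lowest_digit:
  assumes z: "z \<in> qp p" and nz: "z \<noteq> qp_zero"
  obtains L where "z L \<noteq> 0" "\<forall>j<L. z j = 0"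
proof -
  obtain j1 where j1: "z j1 \<noteq> 0" using nz unfolding qp_zero_def by auto
  obtain g0 where g0: "\<forall>j<g0. z j = 0" using qp_vanish_below[OF z] by blast
  have "j1 \<ge> g0" using g0 j1 by (meson not_less)
  define S where "S = {k::nat. z (g0 + int k) \<noteq> 0}"
  have "nat (j1 - g0) \<in> S" unfolding S_def using j1 \<open>j1 \<ge> g0\<close> by simp
  define k0 where "k0 = (LEAST k. k \<in> S)"
  have k0S: "k0 \<in> S" unfolding k0_def by (rule LeastI) fact
  have "z j = 0" if "j < g0 + int k0" for j
  proof (cases "j < g0")
    case False
    hence "nat (j - g0) < k0" using that by linarith
    hence "nat (j - g0) \<notin> S" unfolding k0_def by (rule not_less_Least)
    thus ?thesis unfolding S_def using False by simp
  qed (use g0 in simp)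
  moreover have "z (g0 + int k0) \<noteq> 0" using k0S unfolding S_def by simp
  ultimately show ?thesis using that by blast
qed

lemma qp_norm_le_iff:
  assumes p: "p \<ge> 2" and z: "z \<in> qp p"
  shows "qp_norm p z \<le> real p powr real_of_int g \<longleftrightarrow> (\<forall>j < -g. z j = 0)"
proof (cases "z = qp_zero")
  case True
  then show ?thesis unfolding qp_norm_def qp_zero_def by simp
next
  case False
  then obtain L where zL: "z L \<noteq> 0" and below: "\<forall>j<L. z j = 0"
    using qp_lowest_digit[OF z] by blast
  have "(LEAST j. z j \<noteq> 0) = L"
    by (rule Least_equality) (use zL below in \<open>auto simp: not_less[symmetric]\<close>)
  hence "qp_norm p z = real p powr (- real_of_int L)" unfolding qp_norm_def using False by simp
  moreover have "real p powr (- real_of_int L) \<le> real p powr real_of_int g \<longleftrightarrow> - L \<le> g"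
    using p by (simp only: powr_le_cancel_iff of_int_minus[symmetric] of_int_le_iff)
  moreover have "- L \<le> g \<longleftrightarrow> (\<forall>j < -g. z j = 0)"
  proof
    assume "- L \<le> g" thus "\<forall>j < -g. z j = 0" using below by auto
  next
    assume "\<forall>j < -g. z j = 0" thus "- L \<le> g" using zL by (cases "L < -g") auto
  qed
  ultimately show ?thesis by simp
qed

lemma qp_ball_eq_cylinder:
  assumes p: "p \<ge> 2" and a: "a \<in> qp p"
  shows "qp_ball p g a = {x \<in> qp p. \<forall>j < -g. x j = a j}"
proof -
  have z: "qp_zero \<in> qp p" using qp_zero_in_qp p by simp
  have "x \<in> qp_ball p g a \<longleftrightarrow> (\<forall>j < -g. x j = a j)" if x: "x \<in> qp p" for x
  proof -
    have "x \<in> qp_ball p g a \<longleftrightarrow> (\<forall>j < -g. qp_diff p x a j = qp_zero j)"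
      unfolding qp_ball_def using x qp_norm_le_iff[OF p qp_diff_digits(1)[OF p x a]]
        by (simp add: qp_zero_def)
    also have "\<dots> \<longleftrightarrow> (\<forall>j < -g. x j = qp_add p qp_zero a j)" by (rule qp_diff_cylinder_iff[OF p x a z])
    finally show ?thesis using qp_zero_add[OF p a] by simp
  qed
  thus ?thesis unfolding qp_ball_def by auto
qed

section \<open>Balls and their Haar measure\<close>

abbreviation "monna_floor p t n \<equiv> \<lfloor>t * real p powi n\<rfloor>"

lemma monna_floor_div:
  assumes p: "p \<ge> 2"
  shows "monna_floor p t (n+1) div int p = monna_floor p t n"
proof -
  have "t * real p powi (n+1) / real_of_int (int p) = t * real p powi n"
    using p by (simp add: power_int_add)
  thus ?thesis using floor_divide_real_eq_div[of "int p" "t * real p powi (n+1)"] by simp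
qed

lemma monna_floor_succ:
  assumes p: "p \<ge> 2"
  shows "monna_floor p t (n+1) = int p * monna_floor p t n + monna_floor p t (n+1) mod int p"
  using monna_floor_div[OF p, of t n] by (metis mult_div_mod_eq)

lemma qp_of_real_digit: "qp_of_real p t j = nat (monna_floor p t (j+1) mod int p)"
  unfolding qp_of_real_def by simp

lemma monna_floor_vanish:
  assumes p: "p \<ge> 2" and t: "t \<ge> 0"
  shows "\<exists>g. \<forall>n\<le>g. monna_floor p t n = 0"
proof -
  obtain k where k: "t < real p ^ k" using real_arch_pow[of "real p" t] p by auto
  have "monna_floor p t n = 0" if "n \<le> - int k" for n
  proof -
    have "real p powi n \<le> real p powi (- int k)" using p that by (intro power_int_increasing) auto
    also have "\<dots> = 1 / real p ^ k" by (simp add: power_int_minus power_int_of_nat divide_inverse)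
    finally have "t * real p powi n \<le> t * (1 / real p ^ k)" using t by (intro mult_left_mono) auto
    also have "\<dots> < 1" using k p by (simp add: divide_less_eq)
    finally show ?thesis using t p by (simp add: floor_eq_iff)
  qed
  thus ?thesis by blast
qed

lemma qp_of_real_in:
  assumes p: "p \<ge> 2" and t: "t \<ge> 0"
  shows "qp_of_real p t \<in> qp p"
proof -
  obtain g where g: "\<forall>n\<le>g. monna_floor p t n = 0" using monna_floor_vanish[OF p t] by blast
  have "qp_of_real p t j < p" for j unfolding qp_of_real_digit using p
    by (simp add: nat_less_iff)
  moreover have "\<forall>j<g. qp_of_real p t j = 0" unfolding qp_of_real_digit using g by auto
  ultimately show ?thesis unfolding qp_def by blast
qed

lemma monna_floor_mono:
  assumes p: "p \<ge> 2" and t: "t \<ge> 0" and mn: "m \<le> n"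
  shows "monna_floor p t m \<le> monna_floor p t n"
proof -
  have "real p powi m \<le> real p powi n" using p mn by (intro power_int_increasing) auto
  hence "t * real p powi m \<le> t * real p powi n" using t by (intro mult_left_mono) auto
  thus ?thesis by (rule floor_mono)
qed

lemma qp_of_real_vanish_iff:
  assumes p: "p \<ge> 2" and t: "t \<ge> 0"
  shows "(\<forall>j<m. qp_of_real p t j = 0) \<longleftrightarrow> monna_floor p t m = 0"
proof
  assume F: "monna_floor p t m = 0"
  show "\<forall>j<m. qp_of_real p t j = 0"
  proof (intro allI impI)
    fix j assume "j < m"
    hence "monna_floor p t (j+1) \<le> monna_floor p t m" by (intro monna_floor_mono[OF p t]) auto
    hence "monna_floor p t (j+1) = 0" using F t by (simp add: floor_eq_iff)
    thus "qp_of_real p t j = 0" unfolding qp_of_real_digit by simp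
  qed
next
  assume D: "\<forall>j<m. qp_of_real p t j = 0"
  obtain g where g: "\<forall>n\<le>g. monna_floor p t n = 0" using monna_floor_vanish[OF p t] by blast
  have "min g m \<le> m" by simp
  have "i \<le> m \<longrightarrow> monna_floor p t i = 0" if "min g m \<le> i" for i
    using that
  proof (induction i rule: int_ge_induct)
    case base then show ?case using g by simp
  next
    case (step i)
    show ?case
    proof
      assume "i + 1 \<le> m"
      hence "i < m" by simp
      hence "nat (monna_floor p t (i+1) mod int p) = 0" using D qp_of_real_digit by metis
      hence h0: "monna_floor p t (i+1) mod int p \<le> 0" by simp
      have "monna_floor p t (i+1) mod int p \<ge> 0" using p by simp
      hence "monna_floor p t (i+1) mod int p = 0" using h0 by linarith
      thus "monna_floor p t (i+1) = 0" using monna_floor_succ[OF p, of t i] step.IH \<open>i < m\<close> by simp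
    qed
  qed
  thus "monna_floor p t m = 0" using \<open>min g m \<le> m\<close> by blast
qed

lemma qp_of_real_cylinder_succ:
  assumes p: "p \<ge> 2" and b: "b \<in> qp p" and t: "t \<ge> 0"
    and IH: "(\<forall>j<m. qp_of_real p t j = b j) \<longleftrightarrow> monna_floor p t m = C"
  shows "(\<forall>j<m+1. qp_of_real p t j = b j) \<longleftrightarrow> monna_floor p t (m+1) = int p * C + int (b m)"
proof -
  have bm: "int (b m) < int p" using qp_digit_less[OF b] by simp
  have "(\<forall>j<m+1. qp_of_real p t j = b j) \<longleftrightarrow> (\<forall>j<m. qp_of_real p t j = b j) \<and> qp_of_real p t m = b m"
    by (auto simp: zless_add1_eq le_less)
  also have "\<dots> \<longleftrightarrow> monna_floor p t m = C \<and> monna_floor p t (m+1) mod int p = int (b m)"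
    using IH t p unfolding qp_of_real_digit by (auto simp: nat_eq_iff)
  also have "\<dots> \<longleftrightarrow> monna_floor p t (m+1) = int p * C + int (b m)"
  proof
    assume "monna_floor p t m = C \<and> monna_floor p t (m+1) mod int p = int (b m)"
    thus "monna_floor p t (m+1) = int p * C + int (b m)" using monna_floor_succ[OF p, of t m]
      by simp
  next
    assume h: "monna_floor p t (m+1) = int p * C + int (b m)"
    have "monna_floor p t m = (int p * C + int (b m)) div int p"
      using monna_floor_div[OF p, of t m] h by simp
    also have "\<dots> = C" using bm p by simp
    finally show "monna_floor p t m = C \<and> monna_floor p t (m+1) mod int p = int (b m)"
      using h bm p by simp
  qed
  finally show ?thesis .
qed

lemma qp_of_real_cylinder:
  assumes p: "p \<ge> 2" and b: "b \<in> qp p"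
  shows "\<exists>C::int. C \<ge> 0 \<and> (\<forall>t\<ge>0. (\<forall>j<m. qp_of_real p t j = b j) \<longleftrightarrow> monna_floor p t m = C)"
proof -
  obtain g where g: "\<forall>j<g. b j = 0" using qp_vanish_below[OF b] by blast
  have below: "\<exists>C::int. C \<ge> 0 \<and> (\<forall>t\<ge>0. (\<forall>j<m'. qp_of_real p t j = b j) \<longleftrightarrow> monna_floor p t m' = C)"
    if "m' \<le> g" for m'
  proof -
    have "(\<forall>j<m'. qp_of_real p t j = b j) \<longleftrightarrow> (\<forall>j<m'. qp_of_real p t j = 0)" for t
      using g that by auto
    thus ?thesis using qp_of_real_vanish_iff[OF p] by (intro exI[of _ 0]) auto
  qed
  have "\<exists>C::int. C \<ge> 0 \<and> (\<forall>t\<ge>0. (\<forall>j<m'. qp_of_real p t j = b j) \<longleftrightarrow> monna_floor p t m' = C)"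
    if "g \<le> m'" for m'
    using that
  proof (induction m' rule: int_ge_induct)
    case base then show ?case using below[of g] by simp
  next
    case (step i)
    then obtain C where C: "C \<ge> 0" "\<forall>t\<ge>0. (\<forall>j<i. qp_of_real p t j = b j) \<longleftrightarrow> monna_floor p t i = C"
      by blast
    hence "\<forall>t\<ge>0. (\<forall>j<i+1. qp_of_real p t j = b j) \<longleftrightarrow> monna_floor p t (i+1) = int p * C + int (b i)"
      using qp_of_real_cylinder_succ[OF p b] by blast
    moreover have "int p * C + int (b i) \<ge> 0" using C(1) by simp
    ultimately show ?case by blast
  qed
  thus ?thesis using below[of m] by (cases "m \<le> g") auto
qed

definition qp_balls :: "nat \<Rightarrow> (int \<Rightarrow> nat) set set" where
  "qp_balls p = {qp_ball p g a | g a. a \<in> qp p}"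

lemma qp_balls_subset: "qp_balls p \<subseteq> Pow (qp p)" unfolding qp_balls_def qp_ball_def by auto

lemma space_qp_space[simp]: "space (qp_space p) = qp p"
  unfolding qp_space_def by (simp add: space_measure_of_conv)

lemma sets_qp_space: "sets (qp_space p) = sigma_sets (qp p) (qp_balls p)"
  unfolding qp_space_def qp_balls_def[symmetric] using qp_balls_subset
    by (simp add: sets_measure_of)

lemma qp_ball_sets: "a \<in> qp p \<Longrightarrow> qp_ball p g a \<in> sets (qp_space p)"
  unfolding sets_qp_space qp_balls_def by (intro sigma_sets.Basic) auto

lemma space_haar[simp]: "space (haar p) = qp p" unfolding haar_def by simp
lemma sets_haar[simp]: "sets (haar p) = sets (qp_space p)" unfolding haar_def by simp

lemma atLeastLessThan_nonneg:
  assumes "0 \<le> (c::real)" "0 < Q" shows "{c/Q ..< d} \<subseteq> {0..}"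
proof
  fix t assume "t \<in> {c/Q ..< d}"
  moreover have "0 \<le> c/Q" using assms by simp
  ultimately show "t \<in> {0..}" by auto
qed

text \<open>Digit \<open>j\<close> of \<open>qp_of_real p t\<close> is the last base-\<open>p\<close> digit of \<open>\<lfloor>t p^(j+1)\<rfloor>\<close>, so
  prescribing the digits below \<open>-g\<close> prescribes \<open>\<lfloor>t p^(-g)\<rfloor>\<close>: a ball of radius \<open>p\<^sup>g\<close>
  pulls back to an interval of length \<open>p\<^sup>g\<close>.\<close>
lemma qp_of_real_preimage_ball:
  assumes p: "p \<ge> 2" and a: "a \<in> qp p"
  shows "\<exists>C::int. C \<ge> 0 \<and> qp_of_real p -` qp_ball p g a \<inter> {0..} =
     {of_int C / real p powi (-g) ..< (of_int C + 1) / real p powi (-g)}"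
proof -
  obtain C where C: "C \<ge> 0" "\<forall>t\<ge>0. (\<forall>j< -g. qp_of_real p t j = a j) \<longleftrightarrow> monna_floor p t (-g) = C"
    using qp_of_real_cylinder[OF p a, of "-g"] by blast
  let ?Q = "real p powi (-g)"
  have Q: "?Q > 0" using p by simp
  have "t \<in> qp_of_real p -` qp_ball p g a \<inter> {0..} \<longleftrightarrow> t \<in> {of_int C / ?Q ..< (of_int C
      + 1) / ?Q}" for t
  proof -
    have "t \<in> {of_int C / ?Q ..< (of_int C + 1) / ?Q} \<longleftrightarrow> of_int C \<le> t * ?Q \<and> t * ?Q < of_int C + 1"
      using Q by (simp add: divide_le_eq less_divide_eq)
    also have "\<dots> \<longleftrightarrow> monna_floor p t (-g) = C" by (simp add: floor_eq_iff)
    finally have e1: "t \<in> {of_int C / ?Q ..< (of_int C + 1) / ?Q} \<longleftrightarrow> monna_floor p t (-g) = C" .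
    have "t \<in> {of_int C / ?Q ..< (of_int C + 1) / ?Q} \<Longrightarrow> t \<ge> 0"
      using atLeastLessThan_nonneg[of "of_int C" ?Q "(of_int C + 1) / ?Q"] C(1) Q by auto
    moreover have "t \<ge> 0 \<Longrightarrow> t \<in> qp_of_real p -` qp_ball p g a \<longleftrightarrow> monna_floor p t (-g) = C"
      using qp_ball_eq_cylinder[OF p a, of g] qp_of_real_in[OF p, of t] C(2) by auto
    ultimately show ?thesis using e1 by auto
  qed
  thus ?thesis using C(1) by blast
qed

lemma qp_of_real_measurable:
  assumes p: "p \<ge> 2"
  shows "qp_of_real p \<in> restrict_space lborel {0..} \<rightarrow>\<^sub>M qp_space p"
  unfolding qp_space_def
proof (rule measurable_measure_of)
  show "{qp_ball p g a |g a. a \<in> qp p} \<subseteq> Pow (qp p)" using qp_balls_subset unfolding qp_balls_def .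
  show "qp_of_real p \<in> space (restrict_space lborel {0..}) \<rightarrow> qp p"
    using qp_of_real_in[OF p] by (auto simp: space_restrict_space)
  fix y assume "y \<in> {qp_ball p g a |g a. a \<in> qp p}"
  then obtain g a where y: "y = qp_ball p g a" "a \<in> qp p" by blast
  obtain C where C: "C \<ge> 0" "qp_of_real p -` y \<inter> {0..} =
     {of_int C / real p powi (-g) ..< (of_int C + 1) / real p powi (-g)}"
    using qp_of_real_preimage_ball[OF p y(2), of g] y(1) by blast
  have "qp_of_real p -` y \<inter> space (restrict_space lborel {0..}) = qp_of_real p -` y \<inter> {0..}"
    by (simp add: space_restrict_space)
  also have "\<dots> \<in> sets (restrict_space lborel {0..})"
    unfolding C(2) using C(1) p
    using atLeastLessThan_nonneg[of "of_int C" "real p powi (-g)"]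
      by (subst sets_restrict_space_iff) auto
  finally show "qp_of_real p -` y \<inter> space (restrict_space lborel {0..})
      \<in> sets (restrict_space lborel {0..})" .
qed

lemma emeasure_qp_ball:
  assumes p: "p \<ge> 2" and a: "a \<in> qp p"
  shows "emeasure (haar p) (qp_ball p g a) = ennreal (real p powi g)"
proof -
  obtain C where C: "C \<ge> 0" "qp_of_real p -` qp_ball p g a \<inter> {0..} =
     {of_int C / real p powi (-g) ..< (of_int C + 1) / real p powi (-g)}"
    using qp_of_real_preimage_ball[OF p a, of g] by blast
  let ?Q = "real p powi (-g)"
  have Q: "?Q > 0" using p by simp
  have "emeasure (haar p) (qp_ball p g a)
      = emeasure (restrict_space lborel {0..}) (qp_of_real p -` qp_ball p g a \<inter> {0..})"
    unfolding haar_def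
      by (subst emeasure_distr[OF qp_of_real_measurable[OF p] qp_ball_sets[OF a]]) (simp add: space_restrict_space)
  also have "\<dots> = emeasure lborel {of_int C / ?Q ..< (of_int C + 1) / ?Q}"
    unfolding C(2) using C(1) Q atLeastLessThan_nonneg[of "of_int C" ?Q]
    by (subst emeasure_restrict_space) auto
  also have "\<dots> = ennreal ((of_int C + 1) / ?Q - of_int C / ?Q)"
    using Q by (intro emeasure_lborel_Ico) (simp add: divide_right_mono)
  also have "(of_int C + 1) / ?Q - of_int C / ?Q = real p powi g"
    using Q by (simp add: field_simps power_int_minus)
  finally show ?thesis .
qed

section \<open>The maps \<open>x \<mapsto> x/p - a\<close>\<close>

definition qp_affine :: "nat \<Rightarrow> (int \<Rightarrow> nat) \<Rightarrow> (int \<Rightarrow> nat) \<Rightarrow> (int \<Rightarrow> nat)" where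
  "qp_affine p a x = qp_diff p (qp_divp p x) a"

lemma qp_divp_in:
  assumes x: "x \<in> qp p" shows "qp_divp p x \<in> qp p"
proof -
  obtain g where g: "\<forall>j<g. x j = 0" using qp_vanish_below[OF x] by blast
  have "\<forall>j<g - 1. qp_divp p x j = 0" using g unfolding qp_divp_def by auto
  thus ?thesis using qp_digit_less[OF x] unfolding qp_def qp_divp_def by blast
qed

lemma qp_shift_in:
  assumes x: "x \<in> qp p" shows "(\<lambda>j. x (j - 1)) \<in> qp p"
proof -
  obtain g where g: "\<forall>j<g. x j = 0" using qp_vanish_below[OF x] by blast
  have "\<forall>j<g + 1. x (j - 1) = 0" using g by auto
  thus ?thesis using qp_digit_less[OF x] unfolding qp_def by blast
qed

lemma qp_affine_in: "p \<ge> 2 \<Longrightarrow> a \<in> qp p \<Longrightarrow> x \<in> qp p \<Longrightarrow> qp_affine p a x \<in> qp p"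
  unfolding qp_affine_def by (rule qp_diff_digits(1)) (auto intro: qp_divp_in)

lemma qp_affine_ball_iff:
  assumes p: "p \<ge> 2" and a: "a \<in> qp p" and b: "b \<in> qp p" and x: "x \<in> qp p"
  shows "qp_affine p a x \<in> qp_ball p g b \<longleftrightarrow> (\<forall>j < -g. x (j+1) = qp_add p b a j)"
proof -
  have "qp_affine p a x \<in> qp_ball p g b \<longleftrightarrow> (\<forall>j < -g. qp_diff p (qp_divp p x) a j = b j)"
    unfolding qp_ball_eq_cylinder[OF p b] qp_affine_def using qp_affine_in[OF p a x]
      unfolding qp_affine_def by simp
  also have "\<dots> \<longleftrightarrow> (\<forall>j < -g. qp_divp p x j = qp_add p b a j)"
    by (rule qp_diff_cylinder_iff[OF p qp_divp_in[OF x] a b])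
  finally show ?thesis unfolding qp_divp_def .
qed

lemma qp_affine_preimage_ball:
  assumes p: "p \<ge> 2" and a: "a \<in> qp p" and b: "b \<in> qp p"
  shows "qp_affine p a -` qp_ball p g b \<inter> qp p = qp_ball p (g - 1) (\<lambda>j. qp_add p b a (j - 1))"
proof -
  have c: "(\<lambda>j. qp_add p b a (j - 1)) \<in> qp p" by (rule qp_shift_in[OF qp_add_digits(1)[OF p b a]])
  have "(\<forall>j < -g. x (j+1) = qp_add p b a j) \<longleftrightarrow> (\<forall>j < -(g-1). x j = qp_add p b a (j - 1))" for x
  proof
    assume h: "\<forall>j < -g. x (j+1) = qp_add p b a j"
    show "\<forall>j < -(g-1). x j = qp_add p b a (j - 1)"
    proof (intro allI impI)
      fix j assume "j < -(g-1)"
      hence "j - 1 < -g" by simp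
      thus "x j = qp_add p b a (j - 1)" using h by fastforce
    qed
  next
    assume h: "\<forall>j < -(g-1). x j = qp_add p b a (j - 1)"
    show "\<forall>j < -g. x (j+1) = qp_add p b a j"
    proof (intro allI impI)
      fix j assume "j < -g"
      hence "j + 1 < -(g-1)" by simp
      thus "x (j+1) = qp_add p b a j" using h by fastforce
    qed
  qed
  thus ?thesis unfolding qp_ball_eq_cylinder[OF p c] using qp_affine_ball_iff[OF p a b] by auto
qed

lemma qp_affine_measurable:
  assumes p: "p \<ge> 2" and a: "a \<in> qp p"
  shows "qp_affine p a \<in> haar p \<rightarrow>\<^sub>M qp_space p"
  unfolding qp_space_def[of p]
proof (rule measurable_measure_of)
  show "{qp_ball p g a |g a. a \<in> qp p} \<subseteq> Pow (qp p)" using qp_balls_subset unfolding qp_balls_def .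
  show "qp_affine p a \<in> space (haar p) \<rightarrow> qp p" using qp_affine_in[OF p a] by auto
  fix y assume "y \<in> {qp_ball p g a |g a. a \<in> qp p}"
  then obtain g b where y: "y = qp_ball p g b" "b \<in> qp p" by blast
  have "qp_affine p a -` y \<inter> space (haar p) = qp_ball p (g - 1) (\<lambda>j. qp_add p b a (j - 1))"
    using qp_affine_preimage_ball[OF p a y(2)] y(1) by simp
  also have "\<dots> \<in> sets (haar p)"
    using qp_ball_sets[OF qp_shift_in[OF qp_add_digits(1)[OF p y(2) a]]] by simp
  finally show "qp_affine p a -` y \<inter> space (haar p) \<in> sets (haar p)" .
qed

lemma qp_ball_Int:
  assumes p: "p \<ge> 2" and a: "a \<in> qp p" and b: "b \<in> qp p"
  shows "qp_ball p g a \<inter> qp_ball p g' b = {} \<or> (\<exists>c\<in>qp p. qp_ball p g a \<inter> qp_ball p g' b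
      = qp_ball p (min g g') c)"
proof (cases "qp_ball p g a \<inter> qp_ball p g' b = {}")
  case False
  then obtain x where x: "x \<in> qp_ball p g a" "x \<in> qp_ball p g' b" by blast
  have xq: "x \<in> qp p" using x unfolding qp_ball_def by auto
  have xa: "\<forall>j< -g. x j = a j" and xb: "\<forall>j< -g'. x j = b j" using x
    unfolding qp_ball_eq_cylinder[OF p a] qp_ball_eq_cylinder[OF p b] by auto
  have "qp_ball p g a \<inter> qp_ball p g' b = qp_ball p (min g g') x"
    unfolding qp_ball_eq_cylinder[OF p a] qp_ball_eq_cylinder[OF p b] qp_ball_eq_cylinder[OF p xq]
      using xa xb by (auto simp: min_def)
  thus ?thesis using xq by blast
qed simp

lemma sigma_sets_insert_empty: "sigma_sets \<Omega> (insert {} G) = sigma_sets \<Omega> G"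
proof
  show "sigma_sets \<Omega> (insert {} G) \<subseteq> sigma_sets \<Omega> G"
    by (rule sigma_sets_mono) (auto intro: sigma_sets.Empty sigma_sets.Basic)
  show "sigma_sets \<Omega> G \<subseteq> sigma_sets \<Omega> (insert {} G)" by (rule sigma_sets_mono') auto
qed

lemma emeasure_distr_qp_affine_ball:
  assumes p: "p \<ge> 2" and a: "a \<in> qp p" and b: "b \<in> qp p"
  shows "emeasure (distr (haar p) (qp_space p) (qp_affine p a)) (qp_ball p g b)
      = ennreal (real p powi (g - 1))"
proof -
  have "emeasure (distr (haar p) (qp_space p) (qp_affine p a)) (qp_ball p g b)
      = emeasure (haar p) (qp_affine p a -` qp_ball p g b \<inter> qp p)"
    by (subst emeasure_distr[OF qp_affine_measurable[OF p a] qp_ball_sets[OF b]]) simp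
  also have "\<dots> = ennreal (real p powi (g - 1))"
    unfolding qp_affine_preimage_ball[OF p a b]
      by (rule emeasure_qp_ball[OF p qp_shift_in[OF qp_add_digits(1)[OF p b a]]])
  finally show ?thesis .
qed

lemma Int_stable_qp_balls:
  assumes p: "p \<ge> 2"
  shows "Int_stable (insert {} (qp_balls p))"
  unfolding Int_stable_def
proof (intro ballI)
  fix X Y assume X: "X \<in> insert {} (qp_balls p)" and Y: "Y \<in> insert {} (qp_balls p)"
  show "X \<inter> Y \<in> insert {} (qp_balls p)"
  proof (cases "X = {} \<or> Y = {}")
    case True thus ?thesis by auto
  next
    case False
    then obtain g a g' b where XY: "X = qp_ball p g a" "a \<in> qp p" "Y = qp_ball p g' b" "b \<in> qp p"
      using X Y unfolding qp_balls_def by blast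
    from qp_ball_Int[OF p XY(2) XY(4), of g g'] show ?thesis
    proof
      assume "qp_ball p g a \<inter> qp_ball p g' b = {}" thus ?thesis using XY by simp
    next
      assume "\<exists>c\<in>qp p. qp_ball p g a \<inter> qp_ball p g' b = qp_ball p (min g g') c"
      then obtain c where "c \<in> qp p" "X \<inter> Y = qp_ball p (min g g') c" using XY by blast
      thus ?thesis unfolding qp_balls_def by blast
    qed
  qed
qed

lemma qp_balls_cover:
  assumes p: "p \<ge> 2"
  shows "(\<Union>i. qp_ball p (int i) qp_zero) = qp p"
proof
  have z: "qp_zero \<in> qp p" using qp_zero_in_qp p by simp
  show "(\<Union>i. qp_ball p (int i) qp_zero) \<subseteq> qp p" unfolding qp_ball_def by auto
  show "qp p \<subseteq> (\<Union>i. qp_ball p (int i) qp_zero)"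
  proof
    fix x assume x: "x \<in> qp p"
    obtain g where g: "\<forall>j<g. x j = 0" using qp_vanish_below[OF x] by blast
    have "\<forall>j < - int (nat (-g)). x j = qp_zero j" using g unfolding qp_zero_def by auto
    hence "x \<in> qp_ball p (int (nat (-g))) qp_zero"
      unfolding qp_ball_eq_cylinder[OF p z] using x by blast
    thus "x \<in> (\<Union>i. qp_ball p (int i) qp_zero)" by blast
  qed
qed

lemma distr_qp_affine_balls:
  assumes p: "p \<ge> 2" and a: "a \<in> qp p" and X: "X \<in> insert {} (qp_balls p)"
  shows "emeasure (distr (haar p) (qp_space p) (qp_affine p a)) X
      = emeasure (density (haar p) (\<lambda>_. ennreal (1 / real p))) X"
  using X
proof
  assume "X = {}" thus ?thesis by simp
next
  assume "X \<in> qp_balls p"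
  then obtain g b where X: "X = qp_ball p g b" "b \<in> qp p" unfolding qp_balls_def by blast
  have "emeasure (density (haar p) (\<lambda>_. ennreal (1 / real p))) X
      = ennreal (1 / real p) * ennreal (real p powi g)"
    unfolding X(1) using qp_ball_sets[OF X(2)] emeasure_qp_ball[OF p X(2)]
    by (subst emeasure_density_const) auto
  also have "\<dots> = ennreal (real p powi (g - 1))"
    using p by (simp add: ennreal_mult[symmetric] power_int_diff)
  finally show ?thesis unfolding X(1) using emeasure_distr_qp_affine_ball[OF p a X(2)] by simp
qed

lemma distr_qp_affine:
  assumes p: "p \<ge> 2" and a: "a \<in> qp p"
  shows "distr (haar p) (qp_space p) (qp_affine p a) = density (haar p) (\<lambda>_. ennreal (1 / real p))"
proof (rule measure_eqI_generator_eq[OF Int_stable_qp_balls[OF p] _ distr_qp_affine_balls[OF p a]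
      _ _ _ qp_balls_cover[OF p]])
  have z: "qp_zero \<in> qp p" using qp_zero_in_qp p by simp
  show "insert {} (qp_balls p) \<subseteq> Pow (qp p)" using qp_balls_subset by auto
  show "sets (distr (haar p) (qp_space p) (qp_affine p a))
      = sigma_sets (qp p) (insert {} (qp_balls p))"
    by (simp add: sigma_sets_insert_empty sets_qp_space)
  show "sets (density (haar p) (\<lambda>_. ennreal (1 / real p)))
      = sigma_sets (qp p) (insert {} (qp_balls p))"
    by (simp add: sigma_sets_insert_empty sets_qp_space)
  show "range (\<lambda>i. qp_ball p (int i) qp_zero) \<subseteq> insert {} (qp_balls p)"
    unfolding qp_balls_def using z by auto
  show "emeasure (distr (haar p) (qp_space p) (qp_affine p a)) (qp_ball p (int i) qp_zero) \<noteq> \<infinity>"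
    for i
    using emeasure_distr_qp_affine_ball[OF p a z] by simp
qed

lemma AE_qp_affine:
  assumes p: "p \<ge> 2" and a: "a \<in> qp p" and P: "AE x in haar p. P x"
  shows "AE x in haar p. P (qp_affine p a x)"
proof -
  have "AE x in density (haar p) (\<lambda>_. ennreal (1 / real p)). P x"
    using P by (subst AE_density) auto
  hence "AE x in distr (haar p) (qp_space p) (qp_affine p a). P x"
    unfolding distr_qp_affine[OF p a] .
  thus ?thesis by (rule AE_distrD[OF qp_affine_measurable[OF p a]])
qed

lemma nn_integral_qp_affine:
  assumes p: "p \<ge> 2" and a: "a \<in> qp p" and f: "f \<in> borel_measurable (qp_space p)"
  shows "(\<integral>\<^sup>+ x. f (qp_affine p a x) \<partial>haar p) = ennreal (1 / real p) * (\<integral>\<^sup>+ x. f x \<partial>haar p)"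
proof -
  have "(\<integral>\<^sup>+ x. f (qp_affine p a x) \<partial>haar p)
      = (\<integral>\<^sup>+ x. f x \<partial>distr (haar p) (qp_space p) (qp_affine p a))"
    using f by (subst nn_integral_distr[OF qp_affine_measurable[OF p a]]) auto
  also have "\<dots> = (\<integral>\<^sup>+ x. f x \<partial>density (haar p) (\<lambda>_. ennreal (1 / real p)))"
    by (simp only: distr_qp_affine[OF p a])
  also have "\<dots> = (\<integral>\<^sup>+ x. ennreal (1 / real p) * f x \<partial>haar p)"
    using f by (subst nn_integral_density) (auto simp: measurable_cong_sets[OF sets_haar])
  also have "\<dots> = ennreal (1 / real p) * (\<integral>\<^sup>+ x. f x \<partial>haar p)"
    using f by (subst nn_integral_cmult) (auto simp: measurable_cong_sets[OF sets_haar])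
  finally show ?thesis .
qed

section \<open>The points \<open>k/p\<^sup>n\<close>\<close>

lemma funpow_divp: "(qp_divp p ^^ n) y = (\<lambda>j. y (j + int n))"
  by (induction n) (auto simp: qp_divp_def algebra_simps)

lemma nat_digits_sum:
  fixes c :: "nat \<Rightarrow> nat" and p :: nat
  assumes c: "\<forall>i. c i < p" and p: "p \<ge> 2"
  shows "(\<Sum>i<n. c i * p^i) < p^n \<and> (\<forall>i. ((\<Sum>i<n. c i * p^i) div p^i) mod p
      = (if i < n then c i else 0))"
proof (induction n)
  case 0
  then show ?case using p by simp
next
  case (Suc n)
  define K where "K = (\<Sum>i<n. c i * p^i)"
  have K: "K < p^n" "\<forall>i. (K div p^i) mod p = (if i < n then c i else 0)" using Suc unfolding K_def
    by auto
  have KS: "(\<Sum>i<Suc n. c i * p^i) = K + c n * p^n" unfolding K_def by simp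
  have pp: "p^n > 0" "p > 0" using p by auto
  have bnd: "K + c n * p^n < p^Suc n"
  proof -
    have "K + c n * p^n < p^n + c n * p^n" using K(1) by simp
    also have "\<dots> = (c n + 1) * p^n" by simp
    also have "\<dots> \<le> p * p^n" using c by (intro mult_right_mono) (auto simp: Suc_le_eq)
    finally show ?thesis by simp
  qed
  have dig: "((K + c n * p^n) div p^i) mod p = (if i < Suc n then c i else 0)" for i
  proof (cases "i < n")
    case True
    obtain m where m: "n = Suc m + i" using True by (metis add.commute less_iff_Suc_add add_Suc)
    have e: "c n * p^n = (c n * p^m * p) * p^i"
      unfolding m by (simp add: power_add algebra_simps)
    have "(K + c n * p^n) div p^i = K div p^i + c n * p^m * p"
      unfolding e using pp by (simp add: div_mult_self1 power_not_zero)
    hence "((K + c n * p^n) div p^i) mod p = (K div p^i) mod p" by simp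
    thus ?thesis using K(2) True by simp
  next
    case False
    show ?thesis
    proof (cases "i = n")
      case True
      have "(K + c n * p^n) div p^n = c n" using K(1) pp by (simp add: div_mult_self1)
      thus ?thesis using True c by simp
    next
      case False
      hence "i \<ge> Suc n" using \<open>\<not> i < n\<close> by simp
      hence "p^Suc n \<le> p^i" using p by (intro power_increasing) auto
      hence "(K + c n * p^n) div p^i = 0" using bnd by simp
      thus ?thesis using \<open>i \<ge> Suc n\<close> by simp
    qed
  qed
  show ?case unfolding KS using bnd dig by simp
qed

lemma mod_pow_eq_if_digits:
  assumes "\<forall>i<n. (k div p^i) mod p = (k' div p^i) mod (p::nat)"
  shows "k mod p^n = k' mod p^n"
  using assms
proof (induction n)
  case (Suc n)
  have "k mod p^Suc n = p^n * (k div p^n mod p) + k mod p^n"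
    using mod_mult2_eq[of k "p^n" p] by (simp only: power_Suc2)
  moreover have "k' mod p^Suc n = p^n * (k' div p^n mod p) + k' mod p^n"
    using mod_mult2_eq[of k' "p^n" p] by (simp only: power_Suc2)
  ultimately show ?case using Suc by simp
qed simp

lemma nat_digits_eq:
  assumes "k < p^n" "k' < p^n" "\<forall>i<n. (k div p^i) mod p = (k' div p^i) mod (p::nat)"
  shows "k = k'"
  using mod_pow_eq_if_digits[OF assms(3)] assms(1,2) by simp

lemma Ip_digit_nonneg: "a \<in> Ip p \<Longrightarrow> j \<ge> 0 \<Longrightarrow> a j = 0"
  unfolding Ip_def qp_frac_def by (metis (mono_tags, lifting) mem_Collect_eq not_less)

definition qp_nat_div_pow :: "nat \<Rightarrow> nat \<Rightarrow> nat \<Rightarrow> (int \<Rightarrow> nat)" where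
  "qp_nat_div_pow p n k = (qp_divp p ^^ n) (qp_of_nat p k)"

lemma qp_nat_div_pow_digit: "qp_nat_div_pow p n k j = (if j
    + int n < 0 then 0 else (k div p ^ nat (j + int n)) mod p)"
  unfolding qp_nat_div_pow_def funpow_divp qp_of_nat_def by simp

lemma qp_nat_div_pow_in:
  assumes p: "p \<ge> 2" shows "qp_nat_div_pow p n k \<in> qp p"
proof -
  have "qp_nat_div_pow p n k j < p" for j unfolding qp_nat_div_pow_digit using p by auto
  moreover have "\<forall>j < - int n. qp_nat_div_pow p n k j = 0" unfolding qp_nat_div_pow_digit by auto
  ultimately show ?thesis unfolding qp_def by blast
qed

lemma Ip_as_qp_nat_div_pow:
  assumes p: "p \<ge> 2" and a: "a \<in> Ip p" and lo: "\<forall>j < - int n. a j = 0"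
  shows "\<exists>k<p^n. a = qp_nat_div_pow p n k"
proof -
  have aq: "a \<in> qp p" using a unfolding Ip_def by auto
  define c where "c = (\<lambda>i. if i < n then a (int i - int n) else 0)"
  have c: "\<forall>i. c i < p" unfolding c_def using qp_digit_less[OF aq] p by auto
  define k where "k = (\<Sum>i<n. c i * p^i)"
  have k: "k < p^n" "\<forall>i. (k div p^i) mod p = (if i < n then c i else 0)"
    using nat_digits_sum[OF c p, of n] unfolding k_def by auto
  have "a j = qp_nat_div_pow p n k j" for j
  proof (cases "j + int n < 0")
    case True thus ?thesis unfolding qp_nat_div_pow_digit using lo by simp
  next
    case False
    define i where "i = nat (j + int n)"
    have ji: "j = int i - int n" unfolding i_def using False by simp
    show ?thesis
    proof (cases "i < n")
      case True thus ?thesis unfolding qp_nat_div_pow_digit using False k(2)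
        unfolding c_def i_def[symmetric] ji by simp
    next
      case False': False
      hence "j \<ge> 0" using ji by simp
      thus ?thesis unfolding qp_nat_div_pow_digit using False k(2) False' Ip_digit_nonneg[OF a]
        unfolding i_def[symmetric] by simp
    qed
  qed
  thus ?thesis using k(1) by blast
qed

lemma qp_nat_div_pow_inj:
  assumes "k < p^n" "k' < p^n" "qp_nat_div_pow p n k = qp_nat_div_pow p n k'"
  shows "k = k'"
proof (rule nat_digits_eq[OF assms(1,2)], intro allI impI)
  fix i assume "i < n"
  have "qp_nat_div_pow p n k (int i - int n) = qp_nat_div_pow p n k' (int i - int n)"
    using assms(3) by simp
  thus "(k div p^i) mod p = (k' div p^i) mod p" unfolding qp_nat_div_pow_digit by simp
qed

section \<open>Refinement on the support ball\<close>

lemma refinable_L2: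
  assumes "refinable p phi"
  shows "phi \<in> borel_measurable (haar p)" "L2_sq (haar p) phi < \<infinity>"
proof -
  show "phi \<in> borel_measurable (haar p)"
    using assms unfolding refinable_def qp_L2_def by blast
  have "integrable (haar p) (\<lambda>x. (cmod (phi x))\<^sup>2)"
    using assms unfolding refinable_def qp_L2_def by blast
  from integrableD(2)[OF this] show "L2_sq (haar p) phi < \<infinity>"
    unfolding L2_sq_def by (simp add: top.not_eq_extremum)
qed

lemma refinable_affine_L2:
  assumes p: "p \<ge> 2" and a: "a \<in> qp p" and phi: "refinable p phi"
  shows "(\<lambda>x. phi (qp_affine p a x)) \<in> borel_measurable (haar p)"
    and "L2_sq (haar p) (\<lambda>x. phi (qp_affine p a x)) < \<infinity>"
proof -
  have "phi \<in> borel_measurable (qp_space p)"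
    using refinable_L2(1)[OF phi] measurable_cong_sets[OF sets_haar refl] by blast
  then show "(\<lambda>x. phi (qp_affine p a x)) \<in> borel_measurable (haar p)"
    and "L2_sq (haar p) (\<lambda>x. phi (qp_affine p a x)) < \<infinity>"
    using nn_integral_qp_affine[OF p a, of "\<lambda>y. ennreal ((cmod (phi y))\<^sup>2)"]
      refinable_L2(2)[OF phi] measurable_compose[OF qp_affine_measurable[OF p a]]
    by (auto simp: L2_sq_def ennreal_mult_less_top)
qed

lemma Ip_affine_ball_cases:
  assumes p: "p \<ge> 2" and a: "a \<in> Ip p"
    and x: "x \<in> qp_ball p (int N) qp_zero" and ax: "qp_affine p a x \<in> qp_ball p (int N) qp_zero"
  shows "\<exists>k<p^(N+1). a = qp_nat_div_pow p (N+1) k"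
proof -
  have z: "qp_zero \<in> qp p" using qp_zero_in_qp p by simp
  have aq: "a \<in> qp p" using a unfolding Ip_def by auto
  have xq: "x \<in> qp p" and x0: "\<forall>j < - int N. x j = 0"
    using x unfolding qp_ball_eq_cylinder[OF p z] by (auto simp: qp_zero_def)
  have "\<forall>j < - int N. x (j+1) = qp_add p qp_zero a j"
    using ax unfolding qp_affine_ball_iff[OF p aq z xq] .
  hence xa: "\<forall>j < - int N. x (j+1) = a j" using qp_zero_add[OF p aq] by simp
  have "a j = 0" if "j < - int (N+1)" for j
  proof -
    have "j < - int N" "j + 1 < - int N" using that by auto
    thus ?thesis using xa x0 by metis
  qed
  hence "\<forall>j < - int (N+1). a j = 0" by blast
  thus ?thesis using Ip_as_qp_nat_div_pow[OF p a] by blast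
qed

lemma qp_affine_outside_ball:
  assumes p: "p \<ge> 2" and x: "x \<in> qp p" "x \<notin> qp_ball p (int N) qp_zero"
  shows "qp_affine p (qp_nat_div_pow p (N+1) k) x \<notin> qp_ball p (int N) qp_zero"
proof
  have z: "qp_zero \<in> qp p" using qp_zero_in_qp p by simp
  have aq: "qp_nat_div_pow p (N+1) k \<in> qp p" by (rule qp_nat_div_pow_in[OF p])
  assume "qp_affine p (qp_nat_div_pow p (N+1) k) x \<in> qp_ball p (int N) qp_zero"
  hence "\<forall>j < - int N. x (j+1) = qp_add p qp_zero (qp_nat_div_pow p (N+1) k) j"
    unfolding qp_affine_ball_iff[OF p aq z x(1)] .
  hence T: "\<forall>j < - int N. x (j+1) = qp_nat_div_pow p (N+1) k j" using qp_zero_add[OF p aq] by simp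
  obtain i where i: "i < - int N" "x i \<noteq> 0"
    using x unfolding qp_ball_eq_cylinder[OF p z] by (auto simp: qp_zero_def)
  have "i - 1 < - int N" using i(1) by simp
  hence "x i = qp_nat_div_pow p (N+1) k (i - 1)" using T by fastforce
  also have "\<dots> = 0" unfolding qp_nat_div_pow_digit using i(1) by simp
  finally show False using i(2) by simp
qed

lemma refinement_sum_on_ball:
  fixes phi c :: "(int \<Rightarrow> nat) \<Rightarrow> complex"
  assumes p: "p \<ge> 2" and F: "finite F" "F \<subseteq> Ip p"
    and x: "x \<in> qp_ball p (int N) qp_zero"
    and vanish: "\<forall>a\<in>F. qp_affine p a x \<notin> qp_ball p (int N) qp_zero \<longrightarrow> phi (qp_affine p a x) = 0"
  shows "(\<Sum>a\<in>F. c a * phi (qp_affine p a x))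
    = (\<Sum>k<p^(N+1). (if qp_nat_div_pow p (N+1) k \<in> F then c (qp_nat_div_pow p (N+1) k) else 0)
                   * phi (qp_affine p (qp_nat_div_pow p (N+1) k) x))"
proof -
  let ?a = "qp_nat_div_pow p (N+1)" and ?P = "p^(N+1)"
  let ?K = "?a ` {..<?P}"
  have "(\<Sum>a\<in>F. c a * phi (qp_affine p a x))
      = (\<Sum>a\<in>F \<inter> ?K. c a * phi (qp_affine p a x)) + (\<Sum>a\<in>F - ?K. c a * phi (qp_affine p a x))"
    by (rule sum.Int_Diff[OF F(1)])
  also have "(\<Sum>a\<in>F - ?K. c a * phi (qp_affine p a x)) = 0"
  proof (rule sum.neutral, intro ballI)
    fix a assume aF: "a \<in> F - ?K"
    hence "qp_affine p a x \<notin> qp_ball p (int N) qp_zero"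
      using Ip_affine_ball_cases[OF p _ x] F(2) by blast
    thus "c a * phi (qp_affine p a x) = 0" using vanish aF by auto
  qed
  also have "F \<inter> ?K = ?a ` {k \<in> {..<?P}. ?a k \<in> F}" by auto
  also have "(\<Sum>a\<in>?a ` {k \<in> {..<?P}. ?a k \<in> F}. c a * phi (qp_affine p a x))
      = (\<Sum>k\<in>{k \<in> {..<?P}. ?a k \<in> F}. c (?a k) * phi (qp_affine p (?a k) x))"
  proof (rule sum.reindex_cong[OF _ refl refl])
    have "inj_on ?a {..<?P}" by (intro inj_onI, rule qp_nat_div_pow_inj[where n="N+1"]) auto
    thus "inj_on ?a {k \<in> {..<?P}. ?a k \<in> F}" by (rule inj_on_subset) auto
  qed
  also have "\<dots> = (\<Sum>k<?P. (if ?a k \<in> F then c (?a k) else 0) * phi (qp_affine p (?a k) x))"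
    by (subst sum.inter_filter) (auto intro: sum.cong)
  finally show ?thesis by simp
qed

lemma refinable_approx_on_ball:
  fixes phi :: "(int \<Rightarrow> nat) \<Rightarrow> complex"
  assumes p: "p \<ge> 2" and refin: "refinable p phi"
    and supp: "AE x in haar p. x \<notin> qp_ball p (int N) qp_zero \<longrightarrow> phi x = 0"
  shows "approx_by_span (haar p)
           (\<lambda>k x. indicator (qp_ball p (int N) qp_zero) x * phi (qp_affine p (qp_nat_div_pow p (N+1) k) x))
           (p^(N+1)) (\<lambda>x. indicator (qp_ball p (int N) qp_zero) x * phi x)"
  unfolding approx_by_span_def
proof (intro allI impI)
  fix e :: real assume e: "e > 0"
  let ?S = "qp_ball p (int N) qp_zero" and ?a = "qp_nat_div_pow p (N+1)"
  obtain F c0 where F: "finite F" "F \<subseteq> Ip p"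
    and c0: "(\<integral>\<^sup>+ x. ennreal ((cmod (phi x - (\<Sum>a\<in>F. c0 a * phi (qp_affine p a x))))\<^sup>2) \<partial>haar p)
               < ennreal e"
    using refin e unfolding refinable_def qp_affine_def by blast
  define c where "c = (\<lambda>k. if ?a k \<in> F then c0 (?a k) else 0)"
  have "AE x in haar p. \<forall>a\<in>F. qp_affine p a x \<notin> ?S \<longrightarrow> phi (qp_affine p a x) = 0"
    using F AE_qp_affine[OF p _ supp] by (intro eventually_ball_finite) (auto simp: Ip_def)
  hence "AE x in haar p.
      ennreal ((cmod (indicator ?S x * phi x
                      - (\<Sum>k<p^(N+1). c k * (indicator ?S x * phi (qp_affine p (?a k) x)))))\<^sup>2)
      \<le> ennreal ((cmod (phi x - (\<Sum>a\<in>F. c0 a * phi (qp_affine p a x))))\<^sup>2)"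
  proof eventually_elim
    case (elim x)
    show ?case
    proof (cases "x \<in> ?S")
      case True
      thus ?thesis using refinement_sum_on_ball[OF p F True elim, of c0] by (simp add: c_def)
    qed simp
  qed
  hence "L2_sq (haar p) (\<lambda>x. indicator ?S x * phi x
            - (\<Sum>k<p^(N+1). c k * (indicator ?S x * phi (qp_affine p (?a k) x))))
      \<le> (\<integral>\<^sup>+ x. ennreal ((cmod (phi x - (\<Sum>a\<in>F. c0 a * phi (qp_affine p a x))))\<^sup>2) \<partial>haar p)"
    unfolding L2_sq_def by (rule nn_integral_mono_AE)
  with c0 show "\<exists>c. L2_sq (haar p) (\<lambda>x. indicator ?S x * phi x
            - (\<Sum>k<p^(N+1). c k * (indicator ?S x * phi (qp_affine p (?a k) x)))) < ennreal e"
    by (blast intro: le_less_trans)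
qed

theorem corollary1:
  fixes p N :: nat and phi :: "(int \<Rightarrow> nat) \<Rightarrow> complex"
  assumes "prime p"
    and "refinable p phi"
    and "AE x in haar p. x \<notin> qp_ball p (int N) qp_zero \<longrightarrow> phi x = 0"
  shows "\<exists>h :: nat \<Rightarrow> complex. AE x in haar p.
           phi x = (\<Sum>k<p ^ (N+1). h k *
              phi (qp_diff p (qp_divp p x) ((qp_divp p ^^ (N+1)) (qp_of_nat p k))))"
proof -
  have p: "p \<ge> 2" using assms(1) prime_ge_2_nat by blast
  let ?S = "qp_ball p (int N) qp_zero" and ?a = "qp_nat_div_pow p (N+1)"
  define g where "g k x = indicator ?S x * phi (qp_affine p (?a k) x)" for k x
  have Sm: "?S \<in> sets (haar p)" using qp_ball_sets[of qp_zero p] p qp_zero_in_qp by simp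
  note g_L2 = indicator_mult_L2[OF Sm refinable_affine_L2[OF p qp_nat_div_pow_in[OF p] assms(2)]]
  note f_L2 = indicator_mult_L2[OF Sm refinable_L2[OF assms(2)]]
  obtain h where on_ball: "AE x in haar p. indicator ?S x * phi x = (\<Sum>k<p^(N+1). h k * g k x)"
    using approx_by_span_AE_eq[of "p^(N+1)" g, OF _ _ f_L2] g_L2
      refinable_approx_on_ball[OF p assms(2,3)] unfolding g_def by blast
  have off_ball: "AE x in haar p. \<forall>k\<in>{..<p^(N+1)}.
      qp_affine p (?a k) x \<notin> ?S \<longrightarrow> phi (qp_affine p (?a k) x) = 0"
    using AE_qp_affine[OF p qp_nat_div_pow_in[OF p] assms(3)] by (intro eventually_ball_finite) auto
  have "AE x in haar p. phi x = (\<Sum>k<p^(N+1). h k * phi (qp_affine p (?a k) x))"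
    using on_ball off_ball assms(3) AE_space
  proof eventually_elim
    case (elim x)
    thus ?case using qp_affine_outside_ball[OF p, of x N] by (cases "x \<in> ?S") (auto simp: g_def)
  qed
  thus ?thesis unfolding qp_affine_def qp_nat_div_pow_def by blast
qed

end
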